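(* Consider the AR(1) setting of the context, and let $(\delta_k)_{k\ge1}$ be positive reals with $\delta_k=O(1/k)$ and $2k/\delta_k\in\mathbb N$ for each $k$. Then, with $\tau_k:=k^{-m}+\delta_k$, $$\|\pi-\widehat\pi_k\|_{TV}=O\big(|\ln\tau_k|\,\tau_k\big)\quad\text{and}\quad\int_{\mathbb R}|\mathfrak p(y)-\mathfrak p_k(y)|\,dy=O\big(|\ln\tau_k|\,\tau_k\big)\quad(k\to\infty).$$
   Context: Let $|\varrho|<1$ and let $\nu$ be a probability density on $\mathbb R$ such that: (a) $\eta_m:=\int_{\mathbb R}|x|^m\nu(x)\,dx<\infty$ for some $m\in[1,\infty)$; (b) $\nu$ is continuously differentiable and $\nu'$ is right-differentiable at every point, with right derivative $\nu''_r$; (c) $I':=\int_{\mathbb R}|\nu'(y)|\,dy<\infty$ and $M'':=\sup_{t\in\mathbb R}|\nu''_r(t)|<\infty$. The AR(1) process $X_n=\varrho X_{n-1}+\vartheta_n$ with i.i.d. innovations of density $\nu$ is a Markov chain on $\mathbb R$ with kernel $P(x,dy)=p(x,y)\,dy$, $p(x,y):=\nu(y-\varrho x)$; it has a unique invariant probability $\pi$, with density $\mathfrak p$ with respect to Lebesgue measure. Let $x_0=0$ and $V(x):=\lfloor 1+|x|^m\rfloor$. Discretization: for each integer $k\ge1$, $q_k:=2k/\delta_k$, $\mathbb X_k:=[-k,k)$, $x_{i,k}:=-k+i\delta_k$, $\mathbb X_{i,k}:=[x_{i,k},x_{i+1,k})$ for $i\in I_k:=\{0,\dots,q_k-1\}$.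 Define $m_{i,k}(f):=\int_{-k}^{k}f(y)\inf_{t\in\mathbb X_{i,k}}p(t,y)\,dy$. Let $J_k:=I_k\sqcup\{\ast\}$ and $B_k$ the $J_k\times J_k$ stochastic matrix with $B_k(i,j)=m_{i,k}(1_{\mathbb X_{j,k}})+1_{\mathbb X_{j,k}}(0)(1-m_{i,k}(1_{\mathbb R}))$ for $i,j\in I_k$, $B_k(\ast,j)=1_{\mathbb X_{j,k}}(0)$ for $j\in I_k$, $B_k(i,\ast)=0$ for all $i$. Let $\pi_k=(\pi_{i,k})_{i\in J_k}$ be any non-negative row vector with entries summing to $1$ and $\pi_kB_k=\pi_k$; set $\mathfrak p_k(y):=1_{[-k,k)}(y)\sum_{i\in I_k}\pi_{i,k}\inf_{t\in\mathbb X_{i,k}}p(t,y)$ and $\widehat\pi_k:=\mathfrak p_k(y)\,dy+(1-\int\mathfrak p_k)\delta_0$. Total variation: $\|\pi-\widehat\pi_k\|_{TV}:=\sup\{|\pi(f)-\widehat\pi_k(f)|: f \text{ measurable},\ \sup|f|\le1\}$. *)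

theory Defs
  imports "HOL-Analysis.Analysis" "HOL-Library.Landau_Symbols"
begin

text \<open>Discretization of the AR(1) kernel p(x,y) = nu(y - rho x).
  Index set J_k = I_k plus a cemetery point: Some i for i in I_k, None for the extra point.\<close>

definition grid_x :: "(nat \<Rightarrow> real) \<Rightarrow> nat \<Rightarrow> nat \<Rightarrow> real" where
  "grid_x \<delta> k i = - real k + real i * \<delta> k"

definition cell :: "(nat \<Rightarrow> real) \<Rightarrow> nat \<Rightarrow> nat \<Rightarrow> real set" where
  "cell \<delta> k i = {grid_x \<delta> k i ..< grid_x \<delta> k (Suc i)}"

text \<open>q_k = 2k/delta_k (an integer by hypothesis).\<close>
definition qnum :: "(nat \<Rightarrow> real) \<Rightarrow> nat \<Rightarrow> nat" where
  "qnum \<delta> k = nat \<lfloor>2 * real k / \<delta> k\<rfloor>"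

definition pmin :: "real \<Rightarrow> (real \<Rightarrow> real) \<Rightarrow> (nat \<Rightarrow> real) \<Rightarrow> nat \<Rightarrow> nat \<Rightarrow> real \<Rightarrow> real" where
  "pmin \<rho> \<nu> \<delta> k i y = (INF t\<in>cell \<delta> k i. \<nu> (y - \<rho> * t))"

definition mfun :: "real \<Rightarrow> (real \<Rightarrow> real) \<Rightarrow> (nat \<Rightarrow> real) \<Rightarrow> nat \<Rightarrow> nat \<Rightarrow> (real \<Rightarrow> real) \<Rightarrow> real" where
  "mfun \<rho> \<nu> \<delta> k i f =
     (\<integral>y. indicator {- real k .. real k} y * f y * pmin \<rho> \<nu> \<delta> k i y \<partial>lborel)"

definition Bmat :: "real \<Rightarrow> (real \<Rightarrow> real) \<Rightarrow> (nat \<Rightarrow> real) \<Rightarrow> nat \<Rightarrow> nat option \<Rightarrow> nat option \<Rightarrow> real" where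
  "Bmat \<rho> \<nu> \<delta> k a b =
     (case (a, b) of
        (Some i, Some j) \<Rightarrow> mfun \<rho> \<nu> \<delta> k i (indicator (cell \<delta> k j))
                            + indicator (cell \<delta> k j) (0::real) * (1 - mfun \<rho> \<nu> \<delta> k i (\<lambda>_. 1))
      | (None, Some j) \<Rightarrow> indicator (cell \<delta> k j) (0::real)
      | (_, None) \<Rightarrow> 0)"

definition Jset :: "(nat \<Rightarrow> real) \<Rightarrow> nat \<Rightarrow> nat option set" where
  "Jset \<delta> k = Some ` {..<qnum \<delta> k} \<union> {None}"

definition is_stationary :: "real \<Rightarrow> (real \<Rightarrow> real) \<Rightarrow> (nat \<Rightarrow> real) \<Rightarrow> nat \<Rightarrow> (nat option \<Rightarrow> real) \<Rightarrow> bool" where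
  "is_stationary \<rho> \<nu> \<delta> k \<pi>v \<longleftrightarrow>
     (\<forall>j\<in>Jset \<delta> k. 0 \<le> \<pi>v j) \<and> (\<Sum>j\<in>Jset \<delta> k. \<pi>v j) = 1 \<and>
     (\<forall>j\<in>Jset \<delta> k. (\<Sum>i\<in>Jset \<delta> k. \<pi>v i * Bmat \<rho> \<nu> \<delta> k i j) = \<pi>v j)"

definition pdens_k :: "real \<Rightarrow> (real \<Rightarrow> real) \<Rightarrow> (nat \<Rightarrow> real) \<Rightarrow> nat \<Rightarrow> (nat option \<Rightarrow> real) \<Rightarrow> real \<Rightarrow> real" where
  "pdens_k \<rho> \<nu> \<delta> k \<pi>v y =
     indicator {- real k ..< real k} y * (\<Sum>i<qnum \<delta> k. \<pi>v (Some i) * pmin \<rho> \<nu> \<delta> k i y)"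

text \<open>Total variation distance between pi = p(y)dy and
  hat pi = q(y)dy + (1 - int q) delta_0, written out literally.\<close>
definition tv_dist :: "(real \<Rightarrow> real) \<Rightarrow> (real \<Rightarrow> real) \<Rightarrow> real" where
  "tv_dist p q = (SUP f\<in>{f. f \<in> borel_measurable borel \<and> (\<forall>x. \<bar>f x\<bar> \<le> 1)}.
       \<bar>(\<integral>y. f y * p y \<partial>lborel)
        - ((\<integral>y. f y * q y \<partial>lborel) + (1 - (\<integral>y. q y \<partial>lborel)) * f 0)\<bar>)"

end

theory Submission
  imports Defs
begin

text \<open>
  For a test function f with |f| \<le> 1 put h = P^N f. The kernel P contracts Lipschitz constants by
  |\<rho>| and makes bounded functions Lipschitz, so h is O(|\<rho>|^N)-Lipschitz. Invariance gives
  \<pi> f = \<pi> h, and both \<pi> h and hat-\<pi>_k h are within O(|\<rho>|^N) of h 0: for \<pi> by its first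
  moment, for hat-\<pi>_k by the Lyapunov drift P V \<le> \<lambda> V + L with V x = |x| powr m. Stationarity of the
  discretised chain shows that each application of P moves hat-\<pi>_k by at most twice its mass defect
  c_k = 1 - \<integral> p_k, and the drift together with the L1-continuity of translates of \<nu> gives
  c_k = O(k powr -m + \<delta>_k). Hence |\<pi> f - hat-\<pi>_k f| \<le> 2 N c_k + O(|\<rho>|^N), and N \<approx> |ln \<tau>_k| balances
  the two terms. The L1 distance of the densities is at most twice the total variation distance.
\<close>

lemma INF_Icc_Rats_eq:
  fixes g :: "real \<Rightarrow> real"
  assumes ab: "a < b" and cont: "\<And>t. isCont g t" and nn: "\<And>t. 0 \<le> g t"
  shows "(INF t\<in>{a..<b}. g t) = (INF t\<in>{a..<b} \<inter> \<rat>. g t)"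
proof (rule antisym)
  have bdd: "bdd_below (g ` X)" for X using nn by (auto intro: bdd_belowI[of _ 0])
  obtain r0 where "r0 \<in> \<rat>" "a < r0" "r0 < b" using Rats_dense_in_real[OF ab] by blast
  then have ne: "{a..<b} \<inter> \<rat> \<noteq> {}" by (metis IntI atLeastLessThan_iff empty_iff less_imp_le)
  show "(INF t\<in>{a..<b}. g t) \<le> (INF t\<in>{a..<b} \<inter> \<rat>. g t)"
    by (rule cINF_superset_mono[OF ne bdd]) auto
  show "(INF t\<in>{a..<b} \<inter> \<rat>. g t) \<le> (INF t\<in>{a..<b}. g t)"
  proof (rule cINF_greatest)
    show "{a..<b} \<noteq> {}" using ab by simp
    fix t assume t: "t \<in> {a..<b}"
    show "(INF t\<in>{a..<b} \<inter> \<rat>. g t) \<le> g t"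
    proof (rule ccontr)
      assume "\<not> ?thesis"
      then have e: "0 < (INF t\<in>{a..<b} \<inter> \<rat>. g t) - g t" by simp
      from cont[of t] have "g \<midarrow>t\<rightarrow> g t" by (simp add: isCont_def)
      from this[unfolded LIM_eq, rule_format, OF e] obtain s where s: "0 < s"
        and sx: "\<And>x. x \<noteq> t \<and> norm (x - t) < s \<Longrightarrow> norm (g x - g t) < (INF t\<in>{a..<b} \<inter> \<rat>. g t) - g t"
        by blast
      have "t < min (t + s) b" using t s by auto
      from Rats_dense_in_real[OF this] obtain r where r: "r \<in> \<rat>" "t < r" "r < min (t + s) b" by blast
      then have rin: "r \<in> {a..<b} \<inter> \<rat>" using t by auto
      have "norm (g r - g t) < (INF t\<in>{a..<b} \<inter> \<rat>. g t) - g t"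
        using r by (intro sx) auto
      moreover have "(INF t\<in>{a..<b} \<inter> \<rat>. g t) \<le> g r" by (rule cINF_lower[OF bdd rin])
      ultimately show False by simp
    qed
  qed
qed

lemma lipschitz_borel_measurable:
  fixes h :: "real \<Rightarrow> real"
  assumes "\<And>x x'. \<bar>h x - h x'\<bar> \<le> L * \<bar>x - x'\<bar>" "0 \<le> L"
  shows "h \<in> borel_measurable borel"
proof (rule borel_measurable_continuous_onI)
  have "L-lipschitz_on UNIV h"
    by (rule lipschitz_onI) (use assms in \<open>auto simp: dist_real_def\<close>)
  then show "continuous_on UNIV h" by (rule lipschitz_on_continuous_on)
qed

lemma powr_add_le_split:
  fixes u v e p :: real
  assumes "0 \<le> u" "0 \<le> v" "0 < e" "0 \<le> p"
  shows "(u + v) powr p \<le> ((1 + e) * u) powr p + ((1 + 1 / e) * v) powr p"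
proof (cases "v \<le> e * u")
  case True
  then have "(u + v) powr p \<le> ((1 + e) * u) powr p"
    using assms by (intro powr_mono2) (auto simp: algebra_simps)
  then show ?thesis by (smt (verit) powr_ge_zero)
next
  case False
  then have "u + v \<le> (1 + 1 / e) * v" using assms by (simp add: field_simps)
  then have "(u + v) powr p \<le> ((1 + 1 / e) * v) powr p"
    using assms by (intro powr_mono2) auto
  then show ?thesis by (smt (verit) powr_ge_zero)
qed

lemma abs_le_one_plus_powr:
  fixes x p :: real
  assumes "1 \<le> p"
  shows "\<bar>x\<bar> \<le> 1 + \<bar>x\<bar> powr p"
proof (cases "\<bar>x\<bar> \<le> 1")
  case False
  then have "\<bar>x\<bar> powr 1 \<le> \<bar>x\<bar> powr p" using assms by (intro powr_mono) auto
  then show ?thesis using False by simp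
qed (simp add: add_increasing2)

lemma one_le_powr_minus_mult_powr:
  fixes a y p :: real
  assumes "0 < a" "a \<le> \<bar>y\<bar>" "0 \<le> p"
  shows "1 \<le> a powr (- p) * \<bar>y\<bar> powr p"
proof -
  have "1 \<le> (\<bar>y\<bar> / a) powr p"
    using assms by (intro ge_one_powr_ge_zero) (auto simp: field_simps)
  also have "\<dots> = \<bar>y\<bar> powr p / a powr p"
    by (rule powr_divide)
  also have "\<dots> = a powr (- p) * \<bar>y\<bar> powr p"
    by (simp add: powr_minus divide_inverse mult.commute)
  finally show ?thesis .
qed

lemma sum_power_le_inverse:
  fixes r :: real
  assumes "0 \<le> r" "r < 1"
  shows "(\<Sum>j<n. r ^ j) \<le> 1 / (1 - r)"
proof -
  have "(\<Sum>j<n. r ^ j) = (1 - r ^ n) / (1 - r)"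
    using assms by (subst sum_gp_strict) auto
  also have "\<dots> \<le> 1 / (1 - r)"
    using assms by (intro divide_right_mono) auto
  finally show ?thesis .
qed

lemma power_le_with_log_exponent:
  fixes s \<tau> :: real
  assumes s: "0 < s" "s < 1" and \<tau>: "0 < \<tau>" "\<tau> < 1"
  obtains N :: nat where "1 \<le> N" "s ^ N \<le> \<tau>" "real N \<le> ln \<tau> / ln s + 1"
proof -
  define r where "r = ln \<tau> / ln s"
  have ls: "ln s < 0" using s by simp
  have r0: "0 < r" using ls \<tau> by (simp add: r_def divide_neg_neg)
  define N where "N = nat \<lceil>r\<rceil>"
  have N: "r \<le> real N" "real N \<le> r + 1" using r0 by (auto simp: N_def)
  have "s ^ N = exp (real N * ln s)" using s by (simp add: exp_of_nat_mult)
  also have "\<dots> \<le> exp (r * ln s)" using N ls by (intro exp_mono mult_right_mono_neg) auto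
  also have "\<dots> = \<tau>" using ls \<tau> by (simp add: r_def)
  finally have "s ^ N \<le> \<tau>" .
  moreover have "1 \<le> N" using r0 by (simp add: N_def) linarith
  ultimately show ?thesis using that N(2) by (simp add: r_def)
qed

lemma log_tradeoff_bound:
  fixes A B s \<tau> t :: real
  assumes s: "0 < s" "s < 1" and \<tau>: "0 < \<tau>" "\<tau> \<le> exp (- 1)" and AB: "0 \<le> A" "0 \<le> B"
    and bound: "\<And>N::nat. 1 \<le> N \<Longrightarrow> t \<le> A * \<tau> * real N + B * s ^ N"
  shows "t \<le> (A / - ln s + A + B) * (\<bar>ln \<tau>\<bar> * \<tau>)"
proof -
  have ls: "0 < - ln s" using s by simp
  have ln\<tau>: "ln \<tau> \<le> - 1" using \<tau> by (metis exp_gt_zero ln_exp ln_le_cancel_iff)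
  have \<tau>1: "\<tau> < 1" using \<tau> by (smt (verit) exp_less_one_iff)
  obtain N where N: "1 \<le> N" "s ^ N \<le> \<tau>" "real N \<le> ln \<tau> / ln s + 1"
    using power_le_with_log_exponent[OF s \<tau>(1) \<tau>1] .
  have lnN: "ln \<tau> / ln s = \<bar>ln \<tau>\<bar> / - ln s" using ln\<tau> by simp
  have "t \<le> A * \<tau> * real N + B * s ^ N" by (rule bound[OF N(1)])
  also have "\<dots> \<le> A * \<tau> * (\<bar>ln \<tau>\<bar> / - ln s + 1) + B * \<tau>"
    using N(2,3) AB \<tau> lnN by (intro add_mono mult_left_mono) auto
  also have "\<dots> = (A / - ln s) * (\<bar>ln \<tau>\<bar> * \<tau>) + A * \<tau> + B * \<tau>"
    using ls by (simp add: field_simps)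
  also have "\<dots> \<le> (A / - ln s) * (\<bar>ln \<tau>\<bar> * \<tau>) + A * (\<bar>ln \<tau>\<bar> * \<tau>) + B * (\<bar>ln \<tau>\<bar> * \<tau>)"
  proof -
    have "\<tau> \<le> \<bar>ln \<tau>\<bar> * \<tau>" using ln\<tau> \<tau> mult_right_mono[of 1 "\<bar>ln \<tau>\<bar>" \<tau>] by simp
    then show ?thesis using AB ls by (intro add_mono mult_left_mono) (auto simp: divide_nonneg_neg)
  qed
  finally show ?thesis by (simp add: algebra_simps)
qed

lemma eventually_powr_plus_small:
  fixes \<delta> :: "nat \<Rightarrow> real" and m \<epsilon> :: real
  assumes \<delta>: "\<delta> \<in> O(\<lambda>k. 1 / real k)" and m: "1 \<le> m" and \<epsilon>: "0 < \<epsilon>"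
  shows "eventually (\<lambda>k. real k powr (- m) + \<delta> k \<le> \<epsilon>) at_top"
proof -
  obtain c where c: "c > 0" and ev: "eventually (\<lambda>k. norm (\<delta> k) \<le> c * norm (1 / real k)) at_top"
    using \<delta> by (elim landau_o.bigE)
  have "((\<lambda>k. (1 + c) / real k) \<longlongrightarrow> 0) at_top" by (rule lim_const_over_n)
  then have small: "eventually (\<lambda>k. (1 + c) / real k < \<epsilon>) at_top"
    using \<epsilon> by (rule order_tendstoD)
  show ?thesis
    using ev small eventually_ge_at_top[of 1]
  proof eventually_elim
    case (elim k)
    then have kpos: "0 < real k" by simp
    have "real k powr (- m) \<le> real k powr (- 1)"
      using elim m by (intro powr_mono) auto
    then have "real k powr (- m) \<le> 1 / real k" using kpos by (simp add: powr_minus_divide)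
    moreover have "\<delta> k \<le> c / real k" using elim(1) kpos by simp
    ultimately show ?case using elim(2) by (simp add: add_divide_distrib)
  qed
qed

locale ar1 =
  fixes \<rho> m :: real and \<nu> \<nu>' \<pp> :: "real \<Rightarrow> real"
  assumes rho: "\<bar>\<rho>\<bar> < 1"
    and nu_meas[measurable]: "\<nu> \<in> borel_measurable borel"
    and nu_nonneg: "\<And>x. 0 \<le> \<nu> x"
    and nu_int: "integrable lborel \<nu>"
    and nu_one: "(\<integral>x. \<nu> x \<partial>lborel) = 1"
    and m: "1 \<le> m"
    and moment: "integrable lborel (\<lambda>x. \<bar>x\<bar> powr m * \<nu> x)"
    and nu_deriv: "\<And>x. (\<nu> has_real_derivative \<nu>' x) (at x)"
    and nu'_cont: "continuous_on UNIV \<nu>'"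
    and I': "integrable lborel (\<lambda>y. \<bar>\<nu>' y\<bar>)"
    and p_meas[measurable]: "\<pp> \<in> borel_measurable borel"
    and p_nonneg: "\<And>x. 0 \<le> \<pp> x"
    and p_int: "integrable lborel \<pp>"
    and p_one: "(\<integral>x. \<pp> x \<partial>lborel) = 1"
    and p_invariant: "\<And>A. A \<in> sets borel \<Longrightarrow>
        (\<integral>y. indicator A y * \<pp> y \<partial>lborel)
        = (\<integral>x. \<pp> x * (\<integral>y. indicator A y * \<nu> (y - \<rho> * x) \<partial>lborel) \<partial>lborel)"
begin

lemma nu'_meas[measurable]: "\<nu>' \<in> borel_measurable borel"
  using nu'_cont by (rule borel_measurable_continuous_onI)

lemma isCont_nu: "isCont \<nu> t"
  using nu_deriv[of t] by (rule DERIV_isCont)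

lemma integrable_nu_shift: "integrable lborel (\<lambda>y. \<nu> (y - a))"
  using lborel_integrable_real_affine[OF nu_int, of 1 "-a"] by simp

lemma integral_nu_shift: "(\<integral>y. \<nu> (y - a) \<partial>lborel) = 1"
  using lborel_integral_real_affine[of 1 "\<lambda>y. \<nu> (y - a)" a] nu_one by simp

lemma integrable_bounded_mult_nu_shift:
  assumes [measurable]: "g \<in> borel_measurable borel" and "\<And>y. \<bar>g y\<bar> \<le> B"
  shows "integrable lborel (\<lambda>y. g y * \<nu> (y - a))"
proof (rule Bochner_Integration.integrable_bound[OF integrable_mult_right[OF integrable_nu_shift, of B a]])
  show "AE x in lborel. norm (g x * \<nu> (x - a)) \<le> norm (B * \<nu> (x - a))"
    using assms(2) nu_nonneg by (auto simp: abs_mult intro!: mult_right_mono order_trans[OF _ abs_ge_self])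
qed measurable

subsection \<open>Variation of \<nu> and the contraction of the kernel\<close>

definition var_nu :: real where "var_nu = (\<integral>u. \<bar>\<nu>' u\<bar> \<partial>lborel)"

definition local_var :: "real \<Rightarrow> real \<Rightarrow> real" where
  "local_var a z = (\<integral>u. indicator {z-a..z+a} u * \<bar>\<nu>' u\<bar> \<partial>lborel)"

lemma var_nu_nonneg: "0 \<le> var_nu"
  unfolding var_nu_def by (rule integral_nonneg_AE) auto

lemma integrable_indicator_abs_nu':
  "A \<in> sets borel \<Longrightarrow> integrable lborel (\<lambda>u. indicator A u * \<bar>\<nu>' u\<bar>)"
  using integrable_real_mult_indicator[of A lborel, OF _ I'] by (simp add: mult.commute)

lemma nu_diff_eq_integral:
  assumes "lo \<le> hi"
  shows "\<nu> hi - \<nu> lo = (\<integral>u. indicator {lo..hi} u * \<nu>' u \<partial>lborel)"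
proof -
  have "(LBINT u=lo..hi. \<nu>' u) = \<nu> hi - \<nu> lo"
  proof (rule interval_integral_FTC_finite)
    show "continuous_on {min lo hi..max lo hi} \<nu>'"
      by (rule continuous_on_subset[OF nu'_cont]) simp
    fix x show "(\<nu> has_vector_derivative \<nu>' x) (at x within {min lo hi..max lo hi})"
      using nu_deriv[of x] unfolding has_real_derivative_iff_has_vector_derivative
      by (rule has_vector_derivative_at_within)
  qed
  then show ?thesis
    using assms unfolding interval_integral_Icc[OF assms] set_lebesgue_integral_def by simp
qed

lemma nu_diff_le_local_var:
  assumes "\<bar>s\<bar> \<le> a"
  shows "\<bar>\<nu> (z + s) - \<nu> z\<bar> \<le> local_var a z"
proof -
  define lo where "lo = min z (z + s)"
  define hi where "hi = max z (z + s)"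
  have "\<bar>\<nu> (z + s) - \<nu> z\<bar> = \<bar>\<nu> hi - \<nu> lo\<bar>"
    unfolding lo_def hi_def by (cases "0 \<le> s") auto
  also have "\<dots> = \<bar>\<integral>u. indicator {lo..hi} u * \<nu>' u \<partial>lborel\<bar>"
    using nu_diff_eq_integral[of lo hi] unfolding lo_def hi_def by linarith
  also have "\<dots> \<le> (\<integral>u. indicator {lo..hi} u * \<bar>\<nu>' u\<bar> \<partial>lborel)"
    by (rule order_trans[OF integral_abs_bound]) (simp add: abs_mult)
  also have "\<dots> \<le> local_var a z"
    unfolding local_var_def
    by (rule integral_mono[OF integrable_indicator_abs_nu' integrable_indicator_abs_nu'])
       (use assms in \<open>auto simp: lo_def hi_def split: split_indicator\<close>)
  finally show ?thesis .
qed

lemma local_var_meas[measurable]: "local_var a \<in> borel_measurable borel"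
proof -
  have "local_var a = (\<lambda>z. \<integral>u. (if z - a \<le> u \<and> u \<le> z + a then \<bar>\<nu>' u\<bar> else 0) \<partial>lborel)"
    unfolding local_var_def by (intro ext Bochner_Integration.integral_cong) (auto split: split_indicator)
  then show ?thesis by simp
qed

lemma local_var_nonneg: "0 \<le> local_var a z"
  unfolding local_var_def by (rule integral_nonneg_AE) auto

text \<open>Tonelli: every u lies in exactly 2a of the windows [z - a, z + a].\<close>
lemma nn_integral_local_var:
  assumes "0 \<le> a"
  shows "(\<integral>\<^sup>+z. ennreal (local_var a z) \<partial>lborel) = ennreal (2 * a * var_nu)"
proof -
  let ?f = "\<lambda>u z. (if u - a \<le> z \<and> z \<le> u + a then ennreal \<bar>\<nu>' u\<bar> else 0)"
  have "(\<integral>\<^sup>+z. ennreal (local_var a z) \<partial>lborel) = (\<integral>\<^sup>+z. (\<integral>\<^sup>+u. ?f u z \<partial>lborel) \<partial>lborel)"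
  proof (rule nn_integral_cong)
    fix z
    have "ennreal (local_var a z) = (\<integral>\<^sup>+u. ennreal (indicator {z-a..z+a} u * \<bar>\<nu>' u\<bar>) \<partial>lborel)"
      unfolding local_var_def
      by (rule nn_integral_eq_integral[symmetric, OF integrable_indicator_abs_nu']) auto
    also have "\<dots> = (\<integral>\<^sup>+u. ?f u z \<partial>lborel)"
      by (rule nn_integral_cong) (auto split: split_indicator)
    finally show "ennreal (local_var a z) = (\<integral>\<^sup>+u. ?f u z \<partial>lborel)" .
  qed
  also have "\<dots> = (\<integral>\<^sup>+u. (\<integral>\<^sup>+z. ?f u z \<partial>lborel) \<partial>lborel)"
    by (rule lborel_pair.Fubini') simp
  also have "\<dots> = (\<integral>\<^sup>+u. ennreal (2 * a) * ennreal \<bar>\<nu>' u\<bar> \<partial>lborel)"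
  proof (rule nn_integral_cong)
    fix u
    have "(\<integral>\<^sup>+z. ?f u z \<partial>lborel) = (\<integral>\<^sup>+z. ennreal \<bar>\<nu>' u\<bar> * indicator {u-a..u+a} z \<partial>lborel)"
      by (rule nn_integral_cong) (auto split: split_indicator)
    also have "\<dots> = ennreal \<bar>\<nu>' u\<bar> * emeasure lborel {u-a..u+a}"
      by (rule nn_integral_cmult_indicator) simp
    finally show "(\<integral>\<^sup>+z. ?f u z \<partial>lborel) = ennreal (2 * a) * ennreal \<bar>\<nu>' u\<bar>"
      using assms by (simp add: mult.commute)
  qed
  also have "\<dots> = ennreal (2 * a) * (\<integral>\<^sup>+u. ennreal \<bar>\<nu>' u\<bar> \<partial>lborel)"
    by (rule nn_integral_cmult) measurable
  also have "(\<integral>\<^sup>+u. ennreal \<bar>\<nu>' u\<bar> \<partial>lborel) = ennreal var_nu"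
    unfolding var_nu_def by (rule nn_integral_eq_integral[OF I']) auto
  finally show ?thesis using assms var_nu_nonneg by (simp add: ennreal_mult)
qed

lemma has_bochner_integral_local_var:
  assumes "0 \<le> a"
  shows "has_bochner_integral lborel (local_var a) (2 * a * var_nu)"
  by (rule has_bochner_integral_nn_integral)
     (use assms var_nu_nonneg in \<open>auto simp: local_var_nonneg nn_integral_local_var\<close>)

lemma integrable_local_var_shift:
  assumes "0 \<le> a" shows "integrable lborel (\<lambda>y. local_var a (y - b))"
proof -
  have "integrable lborel (local_var a)"
    using has_bochner_integral_local_var[OF assms] by (simp add: has_bochner_integral_iff)
  then show ?thesis using lborel_integrable_real_affine[of "local_var a" 1 "-b"] by simp
qed

lemma integral_local_var_shift: "0 \<le> a \<Longrightarrow> (\<integral>y. local_var a (y - b) \<partial>lborel) = 2 * a * var_nu"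
  using lborel_integral_real_affine[of 1 "\<lambda>y. local_var a (y - b)" b]
    has_bochner_integral_local_var by (simp add: has_bochner_integral_integral_eq)

lemma L1_dist_nu_shifts: "(\<integral>y. \<bar>\<nu> (y - b) - \<nu> (y - b')\<bar> \<partial>lborel) \<le> 2 * \<bar>b - b'\<bar> * var_nu"
proof -
  have "(\<integral>y. \<bar>\<nu> (y - b) - \<nu> (y - b')\<bar> \<partial>lborel) \<le> (\<integral>y. local_var \<bar>b - b'\<bar> (y - b) \<partial>lborel)"
  proof (rule integral_mono'[OF integrable_local_var_shift])
    fix y
    have "\<bar>\<nu> ((y - b) + (b - b')) - \<nu> (y - b)\<bar> \<le> local_var \<bar>b - b'\<bar> (y - b)"
      by (rule nu_diff_le_local_var) simp
    then show "\<bar>\<nu> (y - b) - \<nu> (y - b')\<bar> \<le> local_var \<bar>b - b'\<bar> (y - b)" by (simp add: abs_minus_commute)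
  qed (auto simp: local_var_nonneg)
  also have "\<dots> = 2 * \<bar>b - b'\<bar> * var_nu" by (simp add: integral_local_var_shift)
  finally show ?thesis .
qed

definition P :: "(real \<Rightarrow> real) \<Rightarrow> real \<Rightarrow> real" where
  "P g x = (\<integral>y. g y * \<nu> (y - \<rho> * x) \<partial>lborel)"

lemma P_abs_le:
  assumes [measurable]: "g \<in> borel_measurable borel" and b: "\<And>y. \<bar>g y\<bar> \<le> B"
  shows "\<bar>P g x\<bar> \<le> B"
proof -
  have "\<bar>P g x\<bar> \<le> (\<integral>y. \<bar>g y * \<nu> (y - \<rho> * x)\<bar> \<partial>lborel)"
    unfolding P_def by (rule integral_abs_bound)
  also have "\<dots> \<le> (\<integral>y. B * \<nu> (y - \<rho> * x) \<partial>lborel)"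
    by (rule integral_mono[OF integrable_abs[OF integrable_bounded_mult_nu_shift[OF assms]]])
       (auto simp: integrable_nu_shift abs_mult nu_nonneg b intro!: mult_right_mono)
  also have "\<dots> = B" by (simp add: integral_nu_shift)
  finally show ?thesis .
qed

lemma P_lipschitz:
  assumes [measurable]: "g \<in> borel_measurable borel" and b: "\<And>y. \<bar>g y\<bar> \<le> 1"
  shows "\<bar>P g x - P g x'\<bar> \<le> (2 * var_nu * \<bar>\<rho>\<bar>) * \<bar>x - x'\<bar>"
proof -
  have "P g x - P g x' = (\<integral>y. g y * (\<nu> (y - \<rho> * x) - \<nu> (y - \<rho> * x')) \<partial>lborel)"
    unfolding P_def
    by (subst Bochner_Integration.integral_diff[symmetric])
       (auto intro!: integrable_bounded_mult_nu_shift[OF assms(1) b] simp: algebra_simps)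
  also have "\<bar>\<dots>\<bar> \<le> (\<integral>y. \<bar>\<nu> (y - \<rho> * x) - \<nu> (y - \<rho> * x')\<bar> \<partial>lborel)"
  proof (rule order_trans[OF integral_abs_bound], rule integral_mono')
    show "integrable lborel (\<lambda>y. \<bar>\<nu> (y - \<rho> * x) - \<nu> (y - \<rho> * x')\<bar>)"
      by (intro integrable_abs Bochner_Integration.integrable_diff integrable_nu_shift)
    fix y
    show "\<bar>g y * (\<nu> (y - \<rho> * x) - \<nu> (y - \<rho> * x'))\<bar> \<le> \<bar>\<nu> (y - \<rho> * x) - \<nu> (y - \<rho> * x')\<bar>"
      using b[of y] by (simp add: abs_mult mult_left_le_one_le)
  qed simp
  also have "\<dots> \<le> 2 * \<bar>\<rho> * x - \<rho> * x'\<bar> * var_nu" by (rule L1_dist_nu_shifts)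
  also have "\<dots> = (2 * var_nu * \<bar>\<rho>\<bar>) * \<bar>x - x'\<bar>"
    by (simp add: abs_mult[symmetric] right_diff_distrib[symmetric])
  finally show ?thesis .
qed

lemma P_eq_convolution: "P g x = (\<integral>z. g (z + \<rho> * x) * \<nu> z \<partial>lborel)"
  unfolding P_def
  using lborel_integral_real_affine[of 1 "\<lambda>y. g y * \<nu> (y - \<rho> * x)" "\<rho> * x"]
  by (simp add: add.commute)

lemma P_lipschitz_contract:
  assumes [measurable]: "g \<in> borel_measurable borel" and b: "\<And>y. \<bar>g y\<bar> \<le> 1"
    and L: "\<And>x x'. \<bar>g x - g x'\<bar> \<le> L * \<bar>x - x'\<bar>"
  shows "\<bar>P g x - P g x'\<bar> \<le> (L * \<bar>\<rho>\<bar>) * \<bar>x - x'\<bar>"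
proof -
  have int: "integrable lborel (\<lambda>z. g (z + c) * \<nu> z)" for c
    using integrable_bounded_mult_nu_shift[of "\<lambda>z. g (z + c)" 1 0] b by simp
  have "P g x - P g x' = (\<integral>z. (g (z + \<rho> * x) - g (z + \<rho> * x')) * \<nu> z \<partial>lborel)"
    unfolding P_eq_convolution
    by (subst Bochner_Integration.integral_diff[symmetric]) (auto intro!: int simp: left_diff_distrib)
  also have "\<bar>\<dots>\<bar> \<le> (\<integral>z. (L * \<bar>\<rho>\<bar> * \<bar>x - x'\<bar>) * \<nu> z \<partial>lborel)"
  proof (rule order_trans[OF integral_abs_bound], rule integral_mono')
    show "integrable lborel (\<lambda>z. (L * \<bar>\<rho>\<bar> * \<bar>x - x'\<bar>) * \<nu> z)"
      using nu_int by simp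
    fix z
    have "\<bar>g (z + \<rho> * x) - g (z + \<rho> * x')\<bar> \<le> L * \<bar>\<rho> * x - \<rho> * x'\<bar>"
      using L[of "z + \<rho> * x" "z + \<rho> * x'"] by simp
    also have "\<dots> = L * \<bar>\<rho>\<bar> * \<bar>x - x'\<bar>"
      by (simp add: abs_mult[symmetric] right_diff_distrib[symmetric])
    finally show "\<bar>(g (z + \<rho> * x) - g (z + \<rho> * x')) * \<nu> z\<bar> \<le> (L * \<bar>\<rho>\<bar> * \<bar>x - x'\<bar>) * \<nu> z"
      by (simp add: abs_mult nu_nonneg mult_right_mono)
    have "0 \<le> L * \<bar>x - x'\<bar>" using L[of x x'] by (meson abs_ge_zero order_trans)
    then have "0 \<le> (L * \<bar>x - x'\<bar>) * (\<bar>\<rho>\<bar> * \<nu> z)"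
      by (simp add: nu_nonneg)
    then show "0 \<le> (L * \<bar>\<rho>\<bar> * \<bar>x - x'\<bar>) * \<nu> z"
      by (simp add: mult_ac)
  qed
  also have "\<dots> = (L * \<bar>\<rho>\<bar>) * \<bar>x - x'\<bar>" using nu_one by simp
  finally show ?thesis .
qed

lemma P_iter_measurable_bounded_lipschitz:
  assumes [measurable]: "f \<in> borel_measurable borel" and b: "\<And>y. \<bar>f y\<bar> \<le> 1"
  shows "(P ^^ n) f \<in> borel_measurable borel \<and> (\<forall>y. \<bar>(P ^^ n) f y\<bar> \<le> 1) \<and>
         (1 \<le> n \<longrightarrow> (\<forall>x x'. \<bar>(P ^^ n) f x - (P ^^ n) f x'\<bar> \<le> (2 * var_nu * \<bar>\<rho>\<bar> ^ n) * \<bar>x - x'\<bar>))"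
proof (induction n)
  case 0 then show ?case using b by simp
next
  case (Suc n)
  let ?g = "(P ^^ n) f"
  from Suc have gm[measurable]: "?g \<in> borel_measurable borel" and gb: "\<And>y. \<bar>?g y\<bar> \<le> 1" by auto
  have lip: "\<bar>P ?g x - P ?g x'\<bar> \<le> (2 * var_nu * \<bar>\<rho>\<bar> ^ Suc n) * \<bar>x - x'\<bar>" for x x'
  proof (cases "n = 0")
    case True then show ?thesis using P_lipschitz[OF gm gb, of x x'] by simp
  next
    case False
    then have "\<bar>?g x - ?g x'\<bar> \<le> (2 * var_nu * \<bar>\<rho>\<bar> ^ n) * \<bar>x - x'\<bar>" for x x' using Suc by auto
    from P_lipschitz_contract[OF gm gb this] show ?thesis by (simp add: mult_ac)
  qed
  have "P ?g \<in> borel_measurable borel"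
    by (rule lipschitz_borel_measurable[OF lip]) (simp add: var_nu_nonneg)
  then show ?case using lip P_abs_le[OF gm gb] by simp
qed

subsection \<open>Lyapunov drift\<close>

definition nu_moment :: real where "nu_moment = (\<integral>x. \<bar>x\<bar> powr m * \<nu> x \<partial>lborel)"
definition rho_gap :: real where "rho_gap = (1 - \<bar>\<rho>\<bar>) / 2"
definition rho_mid :: real where "rho_mid = (1 + \<bar>\<rho>\<bar>) / 2"
definition drift_rate :: real where "drift_rate = rho_mid powr m"
definition drift_const :: real where "drift_const = ((1 + 1 / rho_gap) powr m) * nu_moment"

lemma rho_gap_pos: "0 < rho_gap" using rho by (simp add: rho_gap_def)

lemma rho_mid_pos: "0 < rho_mid" and rho_mid_less_1: "rho_mid < 1" using rho by (auto simp: rho_mid_def)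

lemma drift_rate_nonneg: "0 \<le> drift_rate" by (simp add: drift_rate_def)

lemma drift_rate_less_1: "drift_rate < 1"
proof -
  have "rho_mid powr m \<le> rho_mid powr 1"
    using rho_mid_pos rho_mid_less_1 m by (intro powr_mono') auto
  then show ?thesis using rho_mid_pos rho_mid_less_1 by (simp add: drift_rate_def)
qed

lemma nu_moment_nonneg: "0 \<le> nu_moment" unfolding nu_moment_def by (rule integral_nonneg_AE) (auto simp: nu_nonneg)

lemma drift_const_nonneg: "0 \<le> drift_const" unfolding drift_const_def using nu_moment_nonneg by simp

lemma integrable_moment_nu_shift: "integrable lborel (\<lambda>y. \<bar>y - a\<bar> powr m * \<nu> (y - a))"
  using lborel_integrable_real_affine[OF moment, of 1 "-a"] by simp

lemma integral_moment_nu_shift: "(\<integral>y. \<bar>y - a\<bar> powr m * \<nu> (y - a) \<partial>lborel) = nu_moment"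
  using lborel_integral_real_affine[of 1 "\<lambda>y. \<bar>y - a\<bar> powr m * \<nu> (y - a)" a] unfolding nu_moment_def by simp

lemma powr_drift_pointwise:
  "\<bar>y\<bar> powr m \<le> drift_rate * \<bar>x\<bar> powr m + (1 + 1 / rho_gap) powr m * \<bar>y - \<rho> * x\<bar> powr m"
proof -
  have "\<bar>y\<bar> powr m \<le> (\<bar>\<rho> * x\<bar> + \<bar>y - \<rho> * x\<bar>) powr m"
    using m by (intro powr_mono2) auto
  also have "\<dots> \<le> ((1 + rho_gap) * \<bar>\<rho> * x\<bar>) powr m + ((1 + 1 / rho_gap) * \<bar>y - \<rho> * x\<bar>) powr m"
    using rho_gap_pos m by (intro powr_add_le_split) auto
  also have "((1 + rho_gap) * \<bar>\<rho> * x\<bar>) powr m \<le> (rho_mid * \<bar>x\<bar>) powr m"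
  proof (intro powr_mono2)
    have "rho_mid - (1 + rho_gap) * \<bar>\<rho>\<bar> = (1 - \<bar>\<rho>\<bar>)^2 / 2"
      unfolding rho_mid_def rho_gap_def by (simp add: power2_eq_square field_simps)
    moreover have "0 \<le> (1 - \<bar>\<rho>\<bar>)^2 / 2" by simp
    ultimately have "(1 + rho_gap) * \<bar>\<rho>\<bar> \<le> rho_mid" by linarith
    then show "(1 + rho_gap) * \<bar>\<rho> * x\<bar> \<le> rho_mid * \<bar>x\<bar>"
      by (simp add: abs_mult mult.assoc[symmetric] mult_right_mono)
  qed (use m rho_gap_pos in auto)
  also have "(rho_mid * \<bar>x\<bar>) powr m = drift_rate * \<bar>x\<bar> powr m"
    using rho_mid_pos by (simp add: drift_rate_def powr_mult)
  also have "((1 + 1 / rho_gap) * \<bar>y - \<rho> * x\<bar>) powr m = (1 + 1 / rho_gap) powr m * \<bar>y - \<rho> * x\<bar> powr m"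
    using rho_gap_pos by (simp add: powr_mult)
  finally show ?thesis by simp
qed

lemma powr_mult_nu_shift_le:
  "\<bar>y\<bar> powr m * \<nu> (y - \<rho> * x) \<le> drift_rate * \<bar>x\<bar> powr m * \<nu> (y - \<rho> * x)
     + (1 + 1 / rho_gap) powr m * (\<bar>y - \<rho> * x\<bar> powr m * \<nu> (y - \<rho> * x))"
  using mult_right_mono[OF powr_drift_pointwise nu_nonneg] by (simp only: distrib_right mult.assoc)

lemma integrable_drift_majorant:
  "integrable lborel (\<lambda>y. drift_rate * \<bar>x\<bar> powr m * \<nu> (y - \<rho> * x)
     + (1 + 1 / rho_gap) powr m * (\<bar>y - \<rho> * x\<bar> powr m * \<nu> (y - \<rho> * x)))"
  by (intro Bochner_Integration.integrable_add integrable_mult_right integrable_nu_shift integrable_moment_nu_shift)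

lemma integrable_powr_mult_nu_shift: "integrable lborel (\<lambda>y. \<bar>y\<bar> powr m * \<nu> (y - \<rho> * x))"
  by (rule Bochner_Integration.integrable_bound[OF integrable_drift_majorant])
     (auto simp: nu_nonneg intro!: order_trans[OF powr_mult_nu_shift_le] abs_ge_self)

lemma moment_drift: "(\<integral>y. \<bar>y\<bar> powr m * \<nu> (y - \<rho> * x) \<partial>lborel) \<le> drift_rate * \<bar>x\<bar> powr m + drift_const"
proof -
  have "(\<integral>y. \<bar>y\<bar> powr m * \<nu> (y - \<rho> * x) \<partial>lborel) \<le>
     (\<integral>y. drift_rate * \<bar>x\<bar> powr m * \<nu> (y - \<rho> * x) +
          (1 + 1 / rho_gap) powr m * (\<bar>y - \<rho> * x\<bar> powr m * \<nu> (y - \<rho> * x)) \<partial>lborel)"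
    by (intro integral_mono integrable_powr_mult_nu_shift integrable_drift_majorant powr_mult_nu_shift_le)
  also have "\<dots> = drift_rate * \<bar>x\<bar> powr m + drift_const"
    by (subst Bochner_Integration.integral_add)
       (auto intro!: integrable_mult_right integrable_nu_shift integrable_moment_nu_shift
         simp: integral_nu_shift integral_moment_nu_shift drift_const_def)
  finally show ?thesis .
qed

definition drift_level :: real where "drift_level = drift_const / (1 - drift_rate)"

lemma drift_level_nonneg: "0 \<le> drift_level"
  unfolding drift_level_def using drift_const_nonneg drift_rate_less_1 by simp

lemma drift_level_fixpoint: "drift_rate * drift_level + drift_const = drift_level"
  unfolding drift_level_def using drift_rate_less_1 by (simp add: field_simps)

definition nu_moment1 :: real where "nu_moment1 = (\<integral>x. \<bar>x\<bar> * \<nu> x \<partial>lborel)"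

lemma integrable_abs_mult_nu: "integrable lborel (\<lambda>x. \<bar>x\<bar> * \<nu> x)"
proof (rule Bochner_Integration.integrable_bound)
  show "integrable lborel (\<lambda>x. \<nu> x + \<bar>x\<bar> powr m * \<nu> x)"
    by (intro Bochner_Integration.integrable_add nu_int moment)
  show "AE x in lborel. norm (\<bar>x\<bar> * \<nu> x) \<le> norm (\<nu> x + \<bar>x\<bar> powr m * \<nu> x)"
    using abs_le_one_plus_powr[OF m] nu_nonneg
    by (auto simp: abs_mult intro!: order_trans[OF _ abs_ge_self]
        order_trans[OF mult_right_mono[OF abs_le_one_plus_powr[OF m]]] simp: distrib_right)
qed simp

lemma nu_moment1_nonneg: "0 \<le> nu_moment1" unfolding nu_moment1_def by (rule integral_nonneg_AE) (auto simp: nu_nonneg)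

lemma integrable_abs_moment_nu_shift: "integrable lborel (\<lambda>y. \<bar>y - a\<bar> * \<nu> (y - a))"
  using lborel_integrable_real_affine[OF integrable_abs_mult_nu, of 1 "-a"] by simp

lemma integral_abs_moment_nu_shift: "(\<integral>y. \<bar>y - a\<bar> * \<nu> (y - a) \<partial>lborel) = nu_moment1"
  using lborel_integral_real_affine[of 1 "\<lambda>y. \<bar>y - a\<bar> * \<nu> (y - a)" a] unfolding nu_moment1_def by simp

lemma integrable_abs_mult_nu_shift: "integrable lborel (\<lambda>y. \<bar>y\<bar> * \<nu> (y - a))"
proof (rule Bochner_Integration.integrable_bound)
  show "integrable lborel (\<lambda>y. \<bar>a\<bar> * \<nu> (y - a) + \<bar>y - a\<bar> * \<nu> (y - a))"
    by (intro Bochner_Integration.integrable_add integrable_mult_right integrable_nu_shift integrable_abs_moment_nu_shift)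
  show "AE y in lborel. norm (\<bar>y\<bar> * \<nu> (y - a)) \<le> norm (\<bar>a\<bar> * \<nu> (y - a) + \<bar>y - a\<bar> * \<nu> (y - a))"
    using nu_nonneg by (auto simp: abs_mult simp flip: distrib_right intro!: mult_right_mono)
qed simp

lemma integral_abs_mult_nu_shift_le: "(\<integral>y. \<bar>y\<bar> * \<nu> (y - a) \<partial>lborel) \<le> \<bar>a\<bar> + nu_moment1"
proof -
  have "(\<integral>y. \<bar>y\<bar> * \<nu> (y - a) \<partial>lborel) \<le> (\<integral>y. \<bar>a\<bar> * \<nu> (y - a) + \<bar>y - a\<bar> * \<nu> (y - a) \<partial>lborel)"
    by (intro integral_mono integrable_abs_mult_nu_shift Bochner_Integration.integrable_add integrable_mult_right
        integrable_nu_shift integrable_abs_moment_nu_shift)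
       (use nu_nonneg in \<open>auto simp flip: distrib_right intro!: mult_right_mono\<close>)
  also have "\<dots> = \<bar>a\<bar> + nu_moment1"
    by (subst Bochner_Integration.integral_add)
       (auto intro!: integrable_mult_right integrable_nu_shift integrable_abs_moment_nu_shift simp: integral_nu_shift integral_abs_moment_nu_shift)
  finally show ?thesis .
qed

subsection \<open>Invariance of \<pp>\<close>

definition pP_density :: "real \<Rightarrow> real" where "pP_density y = (\<integral>x. \<pp> x * \<nu> (y - \<rho> * x) \<partial>lborel)"

lemma pP_density_meas[measurable]: "pP_density \<in> borel_measurable borel"
  unfolding pP_density_def by measurable

lemma pP_density_nonneg: "0 \<le> pP_density y"
  unfolding pP_density_def by (rule integral_nonneg_AE) (auto simp: p_nonneg nu_nonneg)

lemma integrable_p_mult_kernel: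
  assumes [measurable]: "g \<in> borel_measurable borel" and b: "\<And>y. \<bar>g y\<bar> \<le> B"
  shows "integrable (lborel \<Otimes>\<^sub>M lborel) (\<lambda>(x, y). \<pp> x * (g y * \<nu> (y - \<rho> * x)))"
proof (rule lborel_pair.Fubini_integrable)
  show "(\<lambda>(x, y). \<pp> x * (g y * \<nu> (y - \<rho> * x))) \<in> borel_measurable (lborel \<Otimes>\<^sub>M lborel)"
    by measurable
  show "AE x in lborel. integrable lborel (\<lambda>y. case (x, y) of (x, y) \<Rightarrow> \<pp> x * (g y * \<nu> (y - \<rho> * x)))"
    using integrable_bounded_mult_nu_shift[OF assms] by simp
  show "integrable lborel (\<lambda>x. \<integral>y. norm (case (x, y) of (x, y) \<Rightarrow> \<pp> x * (g y * \<nu> (y - \<rho> * x))) \<partial>lborel)"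
  proof (rule Bochner_Integration.integrable_bound[OF integrable_mult_right[OF p_int, of B]])
    show "(\<lambda>x. \<integral>y. norm (case (x, y) of (x, y) \<Rightarrow> \<pp> x * (g y * \<nu> (y - \<rho> * x))) \<partial>lborel)
       \<in> borel_measurable lborel" by measurable
    show "AE x in lborel. norm (\<integral>y. norm (case (x, y) of (x, y) \<Rightarrow> \<pp> x * (g y * \<nu> (y - \<rho> * x))) \<partial>lborel)
        \<le> norm (B * \<pp> x)"
    proof (rule AE_I2)
      fix x
      have gm: "(\<lambda>y. \<bar>g y\<bar>) \<in> borel_measurable borel" by measurable
      have "(\<integral>y. norm (case (x, y) of (x, y) \<Rightarrow> \<pp> x * (g y * \<nu> (y - \<rho> * x))) \<partial>lborel)
          = \<pp> x * P (\<lambda>y. \<bar>g y\<bar>) x"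
        unfolding P_def by (simp add: abs_mult p_nonneg nu_nonneg)
      also have "\<dots> \<le> \<pp> x * B"
        using P_abs_le[OF gm, of B x] b by (auto intro!: mult_left_mono simp: p_nonneg)
      finally show "norm (\<integral>y. norm (case (x, y) of (x, y) \<Rightarrow> \<pp> x * (g y * \<nu> (y - \<rho> * x))) \<partial>lborel)
        \<le> norm (B * \<pp> x)"
        using p_nonneg[of x] by (simp add: mult.commute order_trans[OF _ abs_ge_self]
           integral_nonneg_AE)
    qed
  qed
qed

lemma integral_p_P_eq:
  assumes [measurable]: "g \<in> borel_measurable borel" and b: "\<And>y. \<bar>g y\<bar> \<le> B"
  shows "(\<integral>x. \<pp> x * P g x \<partial>lborel) = (\<integral>y. g y * pP_density y \<partial>lborel)"
proof -
  have "(\<integral>x. \<pp> x * P g x \<partial>lborel) = (\<integral>x. (\<integral>y. \<pp> x * (g y * \<nu> (y - \<rho> * x)) \<partial>lborel) \<partial>lborel)"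
    unfolding P_def by simp
  also have "\<dots> = (\<integral>y. (\<integral>x. \<pp> x * (g y * \<nu> (y - \<rho> * x)) \<partial>lborel) \<partial>lborel)"
    by (rule lborel_pair.Fubini_integral[symmetric]) (use integrable_p_mult_kernel[OF assms] in simp)
  also have "\<dots> = (\<integral>y. g y * pP_density y \<partial>lborel)"
    unfolding pP_density_def
    by (rule Bochner_Integration.integral_cong)
       (simp_all add: mult.left_commute[of "\<pp> _"])
  finally show ?thesis .
qed

lemma integrable_pP_density: "integrable lborel pP_density"
proof -
  have "integrable lborel (\<lambda>y. \<integral>x. \<pp> x * ((\<lambda>_. 1::real) y * \<nu> (y - \<rho> * x)) \<partial>lborel)"
    using lborel_pair.integrable_snd[of "\<lambda>x y. \<pp> x * ((\<lambda>_. 1::real) y * \<nu> (y - \<rho> * x))"]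
      integrable_p_mult_kernel[of "\<lambda>_. 1" 1] by simp
  then show ?thesis unfolding pP_density_def by simp
qed

text \<open>The hypothesis p_invariant only speaks about indicators; identifying the two measures extends it
  to all bounded measurable test functions.\<close>
lemma density_p_eq_density_pP: "density lborel (\<lambda>x. ennreal (\<pp> x)) = density lborel (\<lambda>x. ennreal (pP_density x))"
proof (rule measure_eqI)
  show "sets (density lborel (\<lambda>x. ennreal (\<pp> x))) = sets (density lborel (\<lambda>x. ennreal (pP_density x)))"
    by simp
  fix A assume "A \<in> sets (density lborel (\<lambda>x. ennreal (\<pp> x)))"
  then have A[measurable]: "A \<in> sets borel" by simp
  have ind: "indicator A \<in> borel_measurable borel" "\<And>y. \<bar>indicator A y :: real\<bar> \<le> 1"
    by (auto split: split_indicator)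
  have eq: "(\<integral>y. indicator A y * \<pp> y \<partial>lborel) = (\<integral>y. indicator A y * pP_density y \<partial>lborel)"
    using p_invariant[OF A] integral_p_P_eq[OF ind] unfolding P_def by simp
  have "emeasure (density lborel (\<lambda>x. ennreal (\<pp> x))) A = (\<integral>\<^sup>+y. ennreal (indicator A y * \<pp> y) \<partial>lborel)"
    by (subst emeasure_density) (auto intro!: nn_integral_cong split: split_indicator)
  also have "\<dots> = ennreal (\<integral>y. indicator A y * \<pp> y \<partial>lborel)"
    using integrable_real_mult_indicator[of A lborel, OF _ p_int]
    by (intro nn_integral_eq_integral) (auto simp: mult.commute p_nonneg)
  also have "\<dots> = ennreal (\<integral>y. indicator A y * pP_density y \<partial>lborel)" by (simp add: eq)
  also have "\<dots> = (\<integral>\<^sup>+y. ennreal (indicator A y * pP_density y) \<partial>lborel)"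
    using integrable_real_mult_indicator[of A lborel, OF _ integrable_pP_density]
    by (intro nn_integral_eq_integral[symmetric]) (auto simp: mult.commute pP_density_nonneg)
  also have "\<dots> = emeasure (density lborel (\<lambda>x. ennreal (pP_density x))) A"
    by (subst emeasure_density) (auto intro!: nn_integral_cong split: split_indicator)
  finally show "emeasure (density lborel (\<lambda>x. ennreal (\<pp> x))) A = emeasure (density lborel (\<lambda>x. ennreal (pP_density x))) A" .
qed

lemma integral_P_invariant:
  assumes [measurable]: "g \<in> borel_measurable borel" and b: "\<And>y. \<bar>g y\<bar> \<le> B"
  shows "(\<integral>y. g y * \<pp> y \<partial>lborel) = (\<integral>y. P g y * \<pp> y \<partial>lborel)"
proof -
  have "(\<integral>y. g y * \<pp> y \<partial>lborel) = (\<integral>y. g y \<partial>density lborel (\<lambda>x. ennreal (\<pp> x)))"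
    by (subst integral_density) (auto simp: p_nonneg mult.commute)
  also have "\<dots> = (\<integral>y. g y \<partial>density lborel (\<lambda>x. ennreal (pP_density x)))" by (simp add: density_p_eq_density_pP)
  also have "\<dots> = (\<integral>y. g y * pP_density y \<partial>lborel)"
    by (subst integral_density) (auto simp: pP_density_nonneg mult.commute)
  also have "\<dots> = (\<integral>x. \<pp> x * P g x \<partial>lborel)" by (rule integral_p_P_eq[OF assms, symmetric])
  finally show ?thesis by (simp add: mult.commute)
qed

lemma integral_P_iter_invariant:
  assumes [measurable]: "g \<in> borel_measurable borel" and b: "\<And>y. \<bar>g y\<bar> \<le> 1"
  shows "(\<integral>y. g y * \<pp> y \<partial>lborel) = (\<integral>y. (P ^^ n) g y * \<pp> y \<partial>lborel)"
proof (induction n)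
  case (Suc n)
  have "(P ^^ n) g \<in> borel_measurable borel" "\<And>y. \<bar>(P ^^ n) g y\<bar> \<le> 1"
    using P_iter_measurable_bounded_lipschitz[OF assms] by auto
  from integral_P_invariant[OF this] Suc show ?case by simp
qed simp

subsection \<open>First moment of \<pp>\<close>

lemma integrable_bounded_mult_p:
  assumes [measurable]: "g \<in> borel_measurable borel" and "\<And>y. \<bar>g y\<bar> \<le> B"
  shows "integrable lborel (\<lambda>y. g y * \<pp> y)"
proof (rule Bochner_Integration.integrable_bound[OF integrable_mult_right[OF p_int, of B]])
  show "AE x in lborel. norm (g x * \<pp> x) \<le> norm (B * \<pp> x)"
    using assms(2) p_nonneg by (auto simp: abs_mult intro!: mult_right_mono order_trans[OF _ abs_ge_self])
qed measurable

definition p_moment1_bound :: real where "p_moment1_bound = nu_moment1 / (1 - \<bar>\<rho>\<bar>)"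

lemma p_moment1_bound_nonneg: "0 \<le> p_moment1_bound" using rho nu_moment1_nonneg by (simp add: p_moment1_bound_def)

lemma P_iter_truncated_abs_le:
  assumes M: "0 < M"
  shows "(P ^^ n) (\<lambda>y. min \<bar>y\<bar> M / M) x \<le> (\<bar>\<rho>\<bar> ^ n * \<bar>x\<bar> + nu_moment1 * (\<Sum>j<n. \<bar>\<rho>\<bar> ^ j)) / M"
proof (induction n arbitrary: x)
  case 0 then show ?case using M by (simp add: divide_right_mono)
next
  case (Suc n)
  let ?f = "\<lambda>y. min \<bar>y\<bar> M / M"
  have fm: "?f \<in> borel_measurable borel" by measurable
  have fb: "\<And>y. \<bar>?f y\<bar> \<le> 1" using M by (auto simp: abs_div)
  let ?g = "(P ^^ n) ?f"
  have gm[measurable]: "?g \<in> borel_measurable borel" and gb: "\<And>y. \<bar>?g y\<bar> \<le> 1"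
    using P_iter_measurable_bounded_lipschitz[OF fm fb] by auto
  let ?a = "\<bar>\<rho>\<bar> ^ n" and ?b = "nu_moment1 * (\<Sum>j<n. \<bar>\<rho>\<bar> ^ j)"
  have "(P ^^ Suc n) ?f x = P ?g x" by simp
  also have "\<dots> \<le> (\<integral>y. (?a / M) * (\<bar>y\<bar> * \<nu> (y - \<rho> * x)) + (?b / M) * \<nu> (y - \<rho> * x) \<partial>lborel)"
    unfolding P_def[of ?g x]
  proof (rule integral_mono)
    show "integrable lborel (\<lambda>y. ?g y * \<nu> (y - \<rho> * x))" by (rule integrable_bounded_mult_nu_shift[OF gm gb])
    show "integrable lborel (\<lambda>y. (?a / M) * (\<bar>y\<bar> * \<nu> (y - \<rho> * x)) + (?b / M) * \<nu> (y - \<rho> * x))"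
      by (intro Bochner_Integration.integrable_add integrable_mult_right integrable_abs_mult_nu_shift integrable_nu_shift)
    fix y
    have "?g y \<le> (?a * \<bar>y\<bar> + ?b) / M" by (rule Suc)
    then have "?g y * \<nu> (y - \<rho> * x) \<le> ((?a * \<bar>y\<bar> + ?b) / M) * \<nu> (y - \<rho> * x)"
      by (rule mult_right_mono) (rule nu_nonneg)
    then show "?g y * \<nu> (y - \<rho> * x) \<le> (?a / M) * (\<bar>y\<bar> * \<nu> (y - \<rho> * x)) + (?b / M) * \<nu> (y - \<rho> * x)"
      by (simp add: add_divide_distrib distrib_right)
  qed
  also have "\<dots> = (?a / M) * (\<integral>y. \<bar>y\<bar> * \<nu> (y - \<rho> * x) \<partial>lborel) + ?b / M"
    by (subst Bochner_Integration.integral_add)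
       (auto intro!: integrable_mult_right integrable_abs_mult_nu_shift integrable_nu_shift simp: integral_nu_shift)
  also have "\<dots> \<le> (?a / M) * (\<bar>\<rho> * x\<bar> + nu_moment1) + ?b / M"
    using M by (intro add_right_mono mult_left_mono integral_abs_mult_nu_shift_le) auto
  also have "\<dots> = (\<bar>\<rho>\<bar> ^ Suc n * \<bar>x\<bar> + nu_moment1 * (\<Sum>j<Suc n. \<bar>\<rho>\<bar> ^ j)) / M"
    by (simp add: abs_mult algebra_simps add_divide_distrib)
  finally show ?case .
qed

lemma P_iter_truncated_abs_le_min:
  assumes M: "0 < M"
  shows "(P ^^ n) (\<lambda>y. min \<bar>y\<bar> M / M) x \<le> min 1 (\<bar>\<rho>\<bar> ^ n * \<bar>x\<bar> / M) + p_moment1_bound / M"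
proof -
  have fm: "(\<lambda>y. min \<bar>y\<bar> M / M) \<in> borel_measurable borel" by measurable
  have fb: "\<bar>min \<bar>y\<bar> M / M\<bar> \<le> 1" for y using M by (auto simp: abs_div)
  have le1: "(P ^^ n) (\<lambda>y. min \<bar>y\<bar> M / M) x \<le> 1"
    using P_iter_measurable_bounded_lipschitz[OF fm fb] by (auto simp: abs_le_iff)
  have "nu_moment1 * (\<Sum>j<n. \<bar>\<rho>\<bar> ^ j) \<le> nu_moment1 * (1 / (1 - \<bar>\<rho>\<bar>))"
    using sum_power_le_inverse[of "\<bar>\<rho>\<bar>" n] rho nu_moment1_nonneg by (intro mult_left_mono) auto
  then have "nu_moment1 * (\<Sum>j<n. \<bar>\<rho>\<bar> ^ j) / M \<le> p_moment1_bound / M"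
    using M by (intro divide_right_mono) (auto simp: p_moment1_bound_def)
  then have "(P ^^ n) (\<lambda>y. min \<bar>y\<bar> M / M) x \<le> \<bar>\<rho>\<bar> ^ n * \<bar>x\<bar> / M + p_moment1_bound / M"
    using P_iter_truncated_abs_le[OF M, of n x] by (simp add: add_divide_distrib)
  then show ?thesis
    using le1 divide_nonneg_pos[OF p_moment1_bound_nonneg M] unfolding min_def by auto
qed

lemma integral_min_power_p_tendsto_0:
  assumes M: "0 < M"
  shows "(\<lambda>n. \<integral>y. min 1 (\<bar>\<rho>\<bar> ^ n * \<bar>y\<bar> / M) * \<pp> y \<partial>lborel) \<longlonglongrightarrow> 0"
proof -
  have "(\<lambda>n. min 1 (\<bar>\<rho>\<bar> ^ n * \<bar>y\<bar> / M) * \<pp> y) \<longlonglongrightarrow> min 1 (0 * \<bar>y\<bar> / M) * \<pp> y" for y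
    using rho M by (intro tendsto_intros) auto
  moreover have "norm (min 1 (\<bar>\<rho>\<bar> ^ n * \<bar>y\<bar> / M) * \<pp> y) \<le> \<pp> y" for n y
    using M p_nonneg[of y] by (auto simp: abs_mult intro!: mult_left_le_one_le)
  ultimately show ?thesis
    using Bochner_Integration.integral_dominated_convergence[of "\<lambda>y. 0" lborel
        "\<lambda>n y. min 1 (\<bar>\<rho>\<bar> ^ n * \<bar>y\<bar> / M) * \<pp> y" \<pp>]
    by (simp add: p_int)
qed

text \<open>Invariance lets us replace the truncated moment by its image under P^n, whose dependence on the
  starting point dies out geometrically.\<close>
lemma integral_truncated_abs_p_le:
  assumes M: "0 < M"
  shows "(\<integral>y. min \<bar>y\<bar> M * \<pp> y \<partial>lborel) \<le> p_moment1_bound"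
proof -
  let ?f = "\<lambda>y. min \<bar>y\<bar> M / M"
  let ?s = "\<lambda>n y. min 1 (\<bar>\<rho>\<bar> ^ n * \<bar>y\<bar> / M) * \<pp> y"
  have fm[measurable]: "?f \<in> borel_measurable borel" by measurable
  have fb: "\<And>y. \<bar>?f y\<bar> \<le> 1" using M by (auto simp: abs_div)
  have min_le: "\<bar>min 1 (\<bar>\<rho>\<bar> ^ n * \<bar>y\<bar> / M)\<bar> \<le> 1" for n y
    using M by (simp add: abs_le_iff min_def)
  have bound: "(\<integral>y. ?f y * \<pp> y \<partial>lborel) \<le> (\<integral>y. ?s n y \<partial>lborel) + p_moment1_bound / M" for n
  proof -
    have "(\<integral>y. ?f y * \<pp> y \<partial>lborel) = (\<integral>y. (P ^^ n) ?f y * \<pp> y \<partial>lborel)"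
      by (rule integral_P_iter_invariant[OF fm fb])
    also have "\<dots> \<le> (\<integral>y. ?s n y + p_moment1_bound / M * \<pp> y \<partial>lborel)"
    proof (rule integral_mono)
      show "integrable lborel (\<lambda>y. (P ^^ n) ?f y * \<pp> y)"
        using P_iter_measurable_bounded_lipschitz[OF fm fb, of n]
        by (intro integrable_bounded_mult_p[where B = 1]) auto
      show "integrable lborel (\<lambda>y. ?s n y + p_moment1_bound / M * \<pp> y)"
        by (intro Bochner_Integration.integrable_add integrable_mult_right p_int
            integrable_bounded_mult_p[where B = 1]) (auto simp: min_le)
      show "(P ^^ n) ?f y * \<pp> y \<le> ?s n y + p_moment1_bound / M * \<pp> y" for y
        using mult_right_mono[OF P_iter_truncated_abs_le_min[OF M] p_nonneg]
        by (simp add: distrib_right)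
    qed
    also have "\<dots> = (\<integral>y. ?s n y \<partial>lborel) + p_moment1_bound / M"
      by (subst Bochner_Integration.integral_add)
         (auto simp: p_one p_int min_le intro!: integrable_bounded_mult_p[where B = 1])
    finally show ?thesis .
  qed
  have "(\<integral>y. ?f y * \<pp> y \<partial>lborel) \<le> 0 + p_moment1_bound / M"
    using integral_min_power_p_tendsto_0[OF M] bound
    by (intro LIMSEQ_le_const[where X = "\<lambda>n. (\<integral>y. ?s n y \<partial>lborel) + p_moment1_bound / M"]
        tendsto_add tendsto_const) auto
  then have "(\<integral>y. min \<bar>y\<bar> M * \<pp> y \<partial>lborel) / M \<le> p_moment1_bound / M"
    by simp
  then show ?thesis using M by (simp add: divide_le_cancel)
qed

lemma integrable_abs_mult_p: "integrable lborel (\<lambda>y. \<bar>y\<bar> * \<pp> y)"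
proof -
  define f where "f n y = min \<bar>y\<bar> (real (Suc n)) * \<pp> y" for n y
  have fint: "integrable lborel (f n)" for n
    unfolding f_def by (rule integrable_bounded_mult_p[where B = "real (Suc n)"]) auto
  have inc: "incseq (\<lambda>n. \<integral>y. f n y \<partial>lborel)"
    by (rule incseq_SucI, rule integral_mono[OF fint fint])
       (auto simp: f_def p_nonneg intro!: mult_right_mono)
  have bdd: "bdd_above (range (\<lambda>n. \<integral>y. f n y \<partial>lborel))"
    by (rule bdd_aboveI[of _ p_moment1_bound]) (auto simp: f_def intro!: integral_truncated_abs_p_le)
  show ?thesis
  proof (rule integrable_monotone_convergence[OF fint])
    show "AE y in lborel. mono (\<lambda>n. f n y)"
      by (auto simp: f_def mono_def p_nonneg intro!: mult_right_mono)
    show "AE y in lborel. (\<lambda>n. f n y) \<longlonglongrightarrow> \<bar>y\<bar> * \<pp> y"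
    proof (rule AE_I2, rule tendsto_eventually)
      fix y
      obtain N :: nat where "\<bar>y\<bar> \<le> real N" using real_arch_simple by blast
      then show "\<forall>\<^sub>F n in sequentially. f n y = \<bar>y\<bar> * \<pp> y"
        unfolding eventually_sequentially by (intro exI[of _ N]) (auto simp: f_def)
    qed
    show "(\<lambda>n. \<integral>y. f n y \<partial>lborel) \<longlonglongrightarrow> (SUP n. \<integral>y. f n y \<partial>lborel)"
      by (rule LIMSEQ_incseq_SUP[OF bdd inc])
  qed measurable
qed

definition p_moment1 :: real where "p_moment1 = (\<integral>y. \<bar>y\<bar> * \<pp> y \<partial>lborel)"

lemma p_moment1_nonneg: "0 \<le> p_moment1" unfolding p_moment1_def by (rule integral_nonneg_AE) (auto simp: p_nonneg)

lemma integral_p_lipschitz_dev: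
  assumes [measurable]: "h \<in> borel_measurable borel" and b: "\<And>y. \<bar>h y\<bar> \<le> 1"
    and L: "\<And>x x'. \<bar>h x - h x'\<bar> \<le> L * \<bar>x - x'\<bar>"
  shows "\<bar>(\<integral>y. h y * \<pp> y \<partial>lborel) - h 0\<bar> \<le> L * p_moment1"
proof -
  have "(\<integral>y. h y * \<pp> y \<partial>lborel) - h 0 = (\<integral>y. (h y - h 0) * \<pp> y \<partial>lborel)"
    using integrable_bounded_mult_p[OF assms(1,2)] p_int p_one
    by (simp add: left_diff_distrib Bochner_Integration.integral_diff)
  also have "\<bar>\<dots>\<bar> \<le> (\<integral>y. L * (\<bar>y\<bar> * \<pp> y) \<partial>lborel)"
  proof (rule order_trans[OF integral_abs_bound], rule integral_mono')
    show "integrable lborel (\<lambda>y. L * (\<bar>y\<bar> * \<pp> y))" using integrable_abs_mult_p by simp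
    fix y
    have "\<bar>h y - h 0\<bar> \<le> L * \<bar>y\<bar>" using L[of y 0] by simp
    then show "\<bar>(h y - h 0) * \<pp> y\<bar> \<le> L * (\<bar>y\<bar> * \<pp> y)"
      using p_nonneg[of y] by (simp add: abs_mult mult.assoc[symmetric] mult_right_mono)
    have "0 \<le> L * \<bar>y\<bar>" using L[of y 0] abs_ge_zero[of "h y - h 0"] by simp
    then show "0 \<le> L * (\<bar>y\<bar> * \<pp> y)" using p_nonneg[of y] by (simp add: mult.assoc[symmetric])
  qed
  also have "\<dots> = L * p_moment1" by (simp add: p_moment1_def)
  finally show ?thesis .
qed

text \<open>The constant produced by log_tradeoff_bound for the estimate of tv_dist_le.\<close>
definition tv_const :: real where
  "tv_const = 2 * (drift_level + 2 * var_nu) / - ln rho_mid + 2 * (drift_level + 2 * var_nu)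
     + 2 * var_nu * (p_moment1 + 1 + drift_level)"

end

subsection \<open>The discretised chain\<close>

locale ar1_discretised = ar1 +
  fixes \<delta> :: "nat \<Rightarrow> real" and k :: nat and \<pi>v :: "nat option \<Rightarrow> real"
  assumes k1: "1 \<le> k" and dpos: "0 < \<delta> k"
    and dint: "\<exists>n::nat. 2 * real k / \<delta> k = real n"
    and stat: "is_stationary \<rho> \<nu> \<delta> k \<pi>v"
begin

abbreviation "d \<equiv> \<delta> k"
abbreviation "q \<equiv> qnum \<delta> k"
abbreviation "pm \<equiv> pmin \<rho> \<nu> \<delta> k"
abbreviation "mf \<equiv> mfun \<rho> \<nu> \<delta> k"
abbreviation "C i \<equiv> cell \<delta> k i"
abbreviation "\<pi>s i \<equiv> \<pi>v (Some i)"

lemma qnum_mult_delta: "real q * d = 2 * real k"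
proof -
  obtain n :: nat where n: "2 * real k / d = real n" using dint by blast
  then have "q = n" by (simp add: qnum_def)
  then show ?thesis using n dpos by (simp add: field_simps)
qed

lemma cell_eq: "C i = {- real k + real i * d ..< - real k + real i * d + d}"
  by (simp add: cell_def grid_x_def algebra_simps)

lemma cell_nonempty: "C i \<noteq> {}" using dpos by (simp add: cell_eq)

lemma cell_subset: assumes "i < q" shows "C i \<subseteq> {- real k ..< real k}"
proof -
  have "real i + 1 \<le> real q" using assms by simp
  then have "(real i + 1) * d \<le> real q * d" using dpos by (intro mult_right_mono) auto
  then have "real i * d + d \<le> 2 * real k" using qnum_mult_delta by (simp add: algebra_simps)
  then show ?thesis unfolding cell_eq using dpos by auto
qed

lemma mem_cell_iff: "x \<in> C i \<longleftrightarrow> \<lfloor>(x + real k) / d\<rfloor> = int i"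
proof -
  have "x \<in> C i \<longleftrightarrow> real i \<le> (x + real k) / d \<and> (x + real k) / d < real i + 1"
    unfolding cell_eq using dpos by (auto simp: field_simps)
  also have "\<dots> \<longleftrightarrow> \<lfloor>(x + real k) / d\<rfloor> = int i" by (simp add: floor_eq_iff)
  finally show ?thesis .
qed

lemma sum_indicator_cells: "(\<Sum>i<q. indicator (C i) x) = (indicator {- real k ..< real k} x :: real)"
proof (cases "x \<in> {- real k ..< real k}")
  case True
  define j where "j = nat \<lfloor>(x + real k) / d\<rfloor>"
  have fl0: "0 \<le> \<lfloor>(x + real k) / d\<rfloor>" using True dpos by auto
  then have xj: "x \<in> C j" by (simp add: mem_cell_iff j_def)
  have uniq: "x \<in> C i \<longleftrightarrow> i = j" for i
    using fl0 by (auto simp: mem_cell_iff j_def)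
  have "j < q"
  proof (rule ccontr)
    assume "\<not> j < q"
    then have "real q \<le> real j" by simp
    then have "real q * d \<le> real j * d" using dpos by (intro mult_right_mono) auto
    then show False using xj True qnum_mult_delta unfolding cell_eq by auto
  qed
  have "(\<Sum>i<q. indicator (C i) x) = (\<Sum>i<q. if i = j then 1 else (0::real))"
    by (rule sum.cong) (auto simp: uniq split: split_indicator)
  also have "\<dots> = 1" using \<open>j < q\<close> by simp
  finally show ?thesis using True by simp
next
  case False
  then have "x \<notin> C i" if "i < q" for i using cell_subset[OF that] by auto
  then show ?thesis using False by (auto intro!: sum.neutral split: split_indicator)
qed

lemma zero_in_box: "(0::real) \<in> {- real k ..< real k}" using k1 by auto

lemma pm_eq_INF: "pm i y = (INF t\<in>C i. \<nu> (y - \<rho> * t))" by (simp add: pmin_def)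

lemma bdd_below_kernel_image: "bdd_below ((\<lambda>t. \<nu> (y - \<rho> * t)) ` X)"
  using nu_nonneg by (auto intro: bdd_belowI[of _ 0])

lemma pm_nonneg: "0 \<le> pm i y"
  unfolding pm_eq_INF by (rule cINF_greatest[OF cell_nonempty]) (simp add: nu_nonneg)

lemma pm_le_kernel: "t \<in> C i \<Longrightarrow> pm i y \<le> \<nu> (y - \<rho> * t)"
  unfolding pm_eq_INF by (rule cINF_lower[OF bdd_below_kernel_image])

lemma kernel_minus_local_var_le_pm: assumes x: "x \<in> C i"
  shows "\<nu> (y - \<rho> * x) - local_var (\<bar>\<rho>\<bar> * d) (y - \<rho> * x) \<le> pm i y"
  unfolding pm_eq_INF
proof (rule cINF_greatest[OF cell_nonempty])
  fix t assume t: "t \<in> C i"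
  have "\<bar>x - t\<bar> \<le> d" using x t unfolding cell_eq by auto
  then have "\<bar>\<rho> * x - \<rho> * t\<bar> \<le> \<bar>\<rho>\<bar> * d"
    by (simp add: right_diff_distrib[symmetric] abs_mult mult_left_mono)
  then have "\<bar>\<nu> ((y - \<rho> * x) + (\<rho> * x - \<rho> * t)) - \<nu> (y - \<rho> * x)\<bar> \<le> local_var (\<bar>\<rho>\<bar> * d) (y - \<rho> * x)"
    by (rule nu_diff_le_local_var)
  then show "\<nu> (y - \<rho> * x) - local_var (\<bar>\<rho>\<bar> * d) (y - \<rho> * x) \<le> \<nu> (y - \<rho> * t)" by simp
qed

lemma pm_meas[measurable]: "pm i \<in> borel_measurable borel"
proof -
  have eq: "pm i y = (INF t\<in>C i \<inter> \<rat>. \<nu> (y - \<rho> * t))" for y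
    unfolding pm_eq_INF cell_eq
    by (rule INF_Icc_Rats_eq) (use dpos in \<open>auto intro!: continuous_intros isCont_o2[OF _ isCont_nu] simp: nu_nonneg\<close>)
  have "(\<lambda>y. INF t\<in>C i \<inter> \<rat>. \<nu> (y - \<rho> * t)) \<in> borel_measurable borel"
    by (rule borel_measurable_cINF_real) (auto intro: countable_subset[OF _ countable_rat])
  then show ?thesis by (simp add: eq[abs_def])
qed

lemma grid_x_in_cell: "grid_x \<delta> k i \<in> C i"
  using dpos by (simp add: cell_def grid_x_def)

lemma integrable_indicator_bounded_mult_pm:
  assumes [measurable]: "F \<in> borel_measurable borel" and b: "\<And>y. \<bar>F y\<bar> \<le> B"
    and [measurable]: "A \<in> sets borel"
  shows "integrable lborel (\<lambda>y. indicator A y * F y * pm i y)"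
proof (rule Bochner_Integration.integrable_bound[OF integrable_mult_right[OF integrable_nu_shift, of B "\<rho> * grid_x \<delta> k i"]])
  show "AE y in lborel. norm (indicator A y * F y * pm i y) \<le> norm (B * \<nu> (y - \<rho> * grid_x \<delta> k i))"
  proof (rule AE_I2)
    fix y
    have "\<bar>indicator A y * F y * pm i y\<bar> \<le> B * \<nu> (y - \<rho> * grid_x \<delta> k i)"
      using b[of y] pm_nonneg[of i y] pm_le_kernel[OF grid_x_in_cell, of i y]
      by (auto simp: abs_mult split: split_indicator intro!: mult_mono)
    then show "norm (indicator A y * F y * pm i y) \<le> norm (B * \<nu> (y - \<rho> * grid_x \<delta> k i))" by simp
  qed
qed measurable

lemma sum_Jset: "(\<Sum>j\<in>Jset \<delta> k. f j) = (\<Sum>i<q. f (Some i)) + f None"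
proof -
  have "(\<Sum>j\<in>Jset \<delta> k. f j) = (\<Sum>j\<in>Some ` {..<q}. f j) + (\<Sum>j\<in>{None}. f j)"
    unfolding Jset_def by (rule sum.union_disjoint) auto
  also have "(\<Sum>j\<in>Some ` {..<q}. f j) = (\<Sum>i<q. f (Some i))"
    by (rule sum.reindex_cong[of Some]) (auto simp: inj_on_def)
  finally show ?thesis by simp
qed

lemma Bmat_None: "Bmat \<rho> \<nu> \<delta> k a None = 0" by (cases a) (simp_all add: Bmat_def)

lemma Bmat_Some_Some: "Bmat \<rho> \<nu> \<delta> k (Some i) (Some j) =
   mf i (indicator (C j)) + indicator (C j) (0::real) * (1 - mf i (\<lambda>_. 1))"
  by (simp add: Bmat_def)

lemma Bmat_None_Some: "Bmat \<rho> \<nu> \<delta> k None (Some j) = indicator (C j) (0::real)"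
  by (simp add: Bmat_def)

lemma stationaryD: "\<And>j. j \<in> Jset \<delta> k \<Longrightarrow> 0 \<le> \<pi>v j" "(\<Sum>j\<in>Jset \<delta> k. \<pi>v j) = 1"
  "\<And>j. j \<in> Jset \<delta> k \<Longrightarrow> (\<Sum>i\<in>Jset \<delta> k. \<pi>v i * Bmat \<rho> \<nu> \<delta> k i j) = \<pi>v j"
  using stat unfolding is_stationary_def by auto

lemma pi_None: "\<pi>v None = 0"
  using stationaryD(3)[of None] by (simp add: Jset_def Bmat_None)

lemma pis_nonneg: "i < q \<Longrightarrow> 0 \<le> \<pi>s i"
  using stationaryD(1)[of "Some i"] by (simp add: Jset_def)

lemma pis_sum: "(\<Sum>i<q. \<pi>s i) = 1"
  using stationaryD(2) by (simp add: sum_Jset pi_None)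

lemma pis_fixpoint: assumes "j < q"
  shows "\<pi>s j = (\<Sum>i<q. \<pi>s i * (mf i (indicator (C j)) + indicator (C j) (0::real) * (1 - mf i (\<lambda>_. 1))))"
proof -
  have "Some j \<in> Jset \<delta> k" by (simp add: Jset_def assms)
  from stationaryD(3)[OF this] show ?thesis by (simp add: sum_Jset Bmat_Some_Some Bmat_None_Some pi_None)
qed

abbreviation "pd \<equiv> pdens_k \<rho> \<nu> \<delta> k \<pi>v"

lemma pd_nonneg: "0 \<le> pd y"
  unfolding pdens_k_def by (auto intro!: sum_nonneg mult_nonneg_nonneg pis_nonneg pm_nonneg)

lemma pd_meas[measurable]: "pd \<in> borel_measurable borel"
  unfolding pdens_k_def by measurable

lemma pd_out: "y \<notin> {- real k ..< real k} \<Longrightarrow> pd y = 0"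
  unfolding pdens_k_def by simp

lemma mfun_eq_integral_halfopen:
  assumes [measurable]: "F \<in> borel_measurable borel" and b: "\<And>y. \<bar>F y\<bar> \<le> B"
  shows "(\<integral>y. indicator {- real k ..< real k} y * F y * pm i y \<partial>lborel) = mf i F"
  unfolding mfun_def
  by (rule integral_discrete_difference[where X = "{real k}"]) (auto split: split_indicator)

lemma mult_pd_eq_sum:
  "F y * pd y = (\<Sum>i<q. \<pi>s i * (indicator {- real k ..< real k} y * F y * pm i y))"
  unfolding pdens_k_def by (simp add: sum_distrib_left mult_ac)

lemma integrable_mult_pd:
  assumes [measurable]: "F \<in> borel_measurable borel" and "\<And>y. \<bar>F y\<bar> \<le> B"
  shows "integrable lborel (\<lambda>y. F y * pd y)"
  unfolding mult_pd_eq_sum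
  by (intro Bochner_Integration.integrable_sum integrable_mult_right
      integrable_indicator_bounded_mult_pm[OF assms]) simp

lemma integral_mult_pd:
  assumes [measurable]: "F \<in> borel_measurable borel" and "\<And>y. \<bar>F y\<bar> \<le> B"
  shows "(\<integral>y. F y * pd y \<partial>lborel) = (\<Sum>i<q. \<pi>s i * mf i F)"
proof -
  have "(\<integral>y. F y * pd y \<partial>lborel)
      = (\<Sum>i<q. \<integral>y. \<pi>s i * (indicator {- real k ..< real k} y * F y * pm i y) \<partial>lborel)"
    unfolding mult_pd_eq_sum
    by (intro Bochner_Integration.integral_sum integrable_mult_right
        integrable_indicator_bounded_mult_pm[OF assms]) simp
  then show ?thesis by (simp add: mfun_eq_integral_halfopen[OF assms])
qed

lemma integrable_pd: "integrable lborel pd"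
  using integrable_mult_pd[of "\<lambda>_. 1" 1] by simp

lemma integral_pd: "(\<integral>y. pd y \<partial>lborel) = (\<Sum>i<q. \<pi>s i * mf i (\<lambda>_. 1))"
  using integral_mult_pd[of "\<lambda>_. 1" 1] by simp

lemma mfun_one_le_1: "mf i (\<lambda>_. 1) \<le> 1"
proof -
  have "mf i (\<lambda>_. 1) \<le> (\<integral>y. \<nu> (y - \<rho> * grid_x \<delta> k i) \<partial>lborel)"
    unfolding mfun_def
    by (rule integral_mono[OF integrable_indicator_bounded_mult_pm[of "\<lambda>_. 1" 1] integrable_nu_shift])
       (auto intro: order_trans[OF _ pm_le_kernel[OF grid_x_in_cell]] simp: pm_nonneg split: split_indicator)
  then show ?thesis by (simp add: integral_nu_shift)
qed

definition defect :: real where "defect = 1 - (\<integral>y. pd y \<partial>lborel)"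

lemma defect_eq_sum: "defect = (\<Sum>i<q. \<pi>s i * (1 - mf i (\<lambda>_. 1)))"
  unfolding defect_def integral_pd using pis_sum
  by (simp add: right_diff_distrib sum_subtractf)

lemma defect_nonneg: "0 \<le> defect"
  unfolding defect_eq_sum by (intro sum_nonneg mult_nonneg_nonneg pis_nonneg) (auto simp: mfun_one_le_1)

lemma integral_cell_pd: assumes "j < q"
  shows "(\<integral>y. indicator (C j) y * pd y \<partial>lborel) = \<pi>s j - indicator (C j) (0::real) * defect"
proof -
  have "(\<integral>y. indicator (C j) y * pd y \<partial>lborel) = (\<Sum>i<q. \<pi>s i * mf i (indicator (C j)))"
    by (rule integral_mult_pd[of _ 1]) (auto simp: cell_def split: split_indicator)
  also have "\<dots> = \<pi>s j - indicator (C j) (0::real) * defect"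
    unfolding pis_fixpoint[OF assms] defect_eq_sum
    by (simp add: distrib_left sum.distrib sum_distrib_left mult_ac)
  finally show ?thesis .
qed

definition pi_hat :: "(real \<Rightarrow> real) \<Rightarrow> real" where
  "pi_hat F = (\<integral>y. F y * pd y \<partial>lborel) + (1 - (\<integral>y. pd y \<partial>lborel)) * F 0"

lemma pi_hat_eq_sum:
  assumes [measurable]: "F \<in> borel_measurable borel" and b: "\<And>y. \<bar>F y\<bar> \<le> B"
  shows "pi_hat F = (\<Sum>i<q. \<pi>s i * mf i F) + defect * F 0"
  unfolding pi_hat_def defect_def[symmetric] integral_mult_pd[OF assms] ..

lemma integrable_indicator_cell_mult_pd:
  assumes [measurable]: "F \<in> borel_measurable borel" and "\<And>y. \<bar>F y\<bar> \<le> B"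
  shows "integrable lborel (\<lambda>y. indicator (C i) y * F y * pd y)"
proof -
  have "\<bar>indicator (C i) y * F y\<bar> \<le> \<bar>B\<bar>" for y
    using assms(2)[of y] by (auto split: split_indicator)
  then show ?thesis by (intro integrable_mult_pd[where B = "\<bar>B\<bar>"]) (auto simp: cell_def)
qed

lemma pi_hat_eq_sum_cells:
  assumes [measurable]: "F \<in> borel_measurable borel" and b: "\<And>y. \<bar>F y\<bar> \<le> B"
  shows "pi_hat F = (\<Sum>i<q. (\<integral>y. indicator (C i) y * F y * pd y \<partial>lborel) + indicator (C i) (0::real) * defect * F 0)"
proof -
  have "(\<Sum>i<q. \<integral>y. indicator (C i) y * F y * pd y \<partial>lborel)
      = (\<integral>y. (\<Sum>i<q. indicator (C i) y * F y * pd y) \<partial>lborel)"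
    by (rule Bochner_Integration.integral_sum[symmetric]) (rule integrable_indicator_cell_mult_pd[OF assms])
  also have "\<dots> = (\<integral>y. F y * pd y \<partial>lborel)"
  proof (rule Bochner_Integration.integral_cong)
    fix y
    have "(\<Sum>i<q. indicator (C i) y * F y * pd y) = (\<Sum>i<q. indicator (C i) y) * F y * pd y"
      by (simp only: sum_distrib_right)
    then show "(\<Sum>i<q. indicator (C i) y * F y * pd y) = F y * pd y"
      by (auto simp: sum_indicator_cells pd_out split: split_indicator)
  qed simp
  finally show ?thesis
    using sum_indicator_cells[of 0] zero_in_box
    by (simp add: sum.distrib pi_hat_def defect_def flip: sum_distrib_right)
qed

text \<open>This is where stationarity of \<pi>v under Bmat enters.\<close>
lemma sum_cellwise_lower_le_pi_hat:
  assumes [measurable]: "F \<in> borel_measurable borel" and b: "\<And>y. \<bar>F y\<bar> \<le> B"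
    and a: "\<And>i x. i < q \<Longrightarrow> x \<in> C i \<Longrightarrow> a i \<le> F x"
  shows "(\<Sum>i<q. \<pi>s i * a i) \<le> pi_hat F"
  unfolding pi_hat_eq_sum_cells[OF assms(1,2)]
proof (rule sum_mono)
  fix i assume "i \<in> {..<q}"
  then have i: "i < q" by simp
  have "(\<integral>y. indicator (C i) y * pd y \<partial>lborel) * a i = (\<integral>y. indicator (C i) y * a i * pd y \<partial>lborel)"
    by (simp add: mult_ac)
  also have "\<dots> \<le> (\<integral>y. indicator (C i) y * F y * pd y \<partial>lborel)"
    using a[OF i] pd_nonneg
    by (intro integral_mono integrable_indicator_cell_mult_pd[OF assms(1,2)]
        integrable_indicator_cell_mult_pd[of "\<lambda>_. a i" "\<bar>a i\<bar>"])
       (auto split: split_indicator simp: mult_right_mono)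
  finally have "(\<integral>y. indicator (C i) y * pd y \<partial>lborel) * a i \<le> (\<integral>y. indicator (C i) y * F y * pd y \<partial>lborel)" .
  moreover have "indicator (C i) (0::real) * defect * a i \<le> indicator (C i) (0::real) * defect * F 0"
    using a[OF i, of 0] defect_nonneg by (auto split: split_indicator intro!: mult_left_mono)
  ultimately show "\<pi>s i * a i \<le> (\<integral>y. indicator (C i) y * F y * pd y \<partial>lborel) + indicator (C i) (0::real) * defect * F 0"
    using integral_cell_pd[OF i] by (simp add: algebra_simps)
qed

lemma pi_hat_affine:
  assumes [measurable]: "F \<in> borel_measurable borel" and "\<And>y. \<bar>F y\<bar> \<le> B"
  shows "pi_hat (\<lambda>x. a * F x + b) = a * pi_hat F + b"
proof -
  have "(\<integral>y. (a * F y + b) * pd y \<partial>lborel) = a * (\<integral>y. F y * pd y \<partial>lborel) + b * (\<integral>y. pd y \<partial>lborel)"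
    using integrable_mult_pd[OF assms] integrable_pd by (simp add: distrib_right mult.assoc)
  then show ?thesis unfolding pi_hat_def by (simp add: algebra_simps)
qed

lemma pi_hat_uminus:
  assumes "F \<in> borel_measurable borel" and "\<And>y. \<bar>F y\<bar> \<le> B"
  shows "pi_hat (\<lambda>x. - F x) = - pi_hat F"
  using pi_hat_affine[OF assms, of "- 1" 0] by simp

lemma pi_hat_mono:
  assumes [measurable]: "F \<in> borel_measurable borel" "\<And>y. \<bar>F y\<bar> \<le> B"
    and [measurable]: "E \<in> borel_measurable borel" "\<And>y. \<bar>E y\<bar> \<le> B'"
    and le: "\<And>x. x \<in> {- real k ..< real k} \<Longrightarrow> F x \<le> E x"
  shows "pi_hat F \<le> pi_hat E"
proof -
  have "(\<integral>y. F y * pd y \<partial>lborel) \<le> (\<integral>y. E y * pd y \<partial>lborel)"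
  proof (rule integral_mono[OF integrable_mult_pd[OF assms(1,2)] integrable_mult_pd[OF assms(3,4)]])
    fix y show "F y * pd y \<le> E y * pd y"
      using le[of y] pd_out[of y] pd_nonneg[of y]
      by (cases "y \<in> {- real k ..< real k}") (auto intro: mult_right_mono)
  qed
  moreover have "F 0 \<le> E 0" using le zero_in_box by simp
  ultimately show ?thesis
    unfolding pi_hat_def defect_def[symmetric] using defect_nonneg by (simp add: add_mono mult_left_mono)
qed

lemma abs_pi_hat_le:
  assumes [measurable]: "F \<in> borel_measurable borel" "\<And>y. \<bar>F y\<bar> \<le> B"
    and [measurable]: "E \<in> borel_measurable borel" "\<And>y. \<bar>E y\<bar> \<le> B'"
    and le: "\<And>x. x \<in> {- real k ..< real k} \<Longrightarrow> \<bar>F x\<bar> \<le> E x"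
  shows "\<bar>pi_hat F\<bar> \<le> pi_hat E"
proof -
  have "pi_hat F \<le> pi_hat E"
    using le by (intro pi_hat_mono[OF assms(1-4)]) (auto simp: abs_le_iff)
  moreover have "pi_hat (\<lambda>x. - E x) \<le> pi_hat F"
    by (rule pi_hat_mono[OF _ _ assms(1,2), of _ B']) (use le assms(4) in \<open>force simp: abs_le_iff\<close>)+
  ultimately show ?thesis using pi_hat_uminus[OF assms(3,4)] by linarith
qed

lemma abs_pi_hat_minus_sum_le:
  assumes [measurable]: "F \<in> borel_measurable borel" and b: "\<And>y. \<bar>F y\<bar> \<le> B"
    and approx: "\<And>i x. i < q \<Longrightarrow> x \<in> C i \<Longrightarrow> \<bar>F x - a i\<bar> \<le> e i"
  shows "\<bar>pi_hat F - (\<Sum>i<q. \<pi>s i * a i)\<bar> \<le> (\<Sum>i<q. \<pi>s i * e i)"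
proof -
  have "(\<Sum>i<q. \<pi>s i * (a i - e i)) \<le> pi_hat F"
    by (rule sum_cellwise_lower_le_pi_hat[OF assms(1,2)]) (use approx in \<open>force simp: abs_le_iff\<close>)
  moreover have "(\<Sum>i<q. \<pi>s i * (- a i - e i)) \<le> pi_hat (\<lambda>x. - F x)"
    by (rule sum_cellwise_lower_le_pi_hat[where B = B]) (use approx b in \<open>force simp: abs_le_iff\<close>)+
  ultimately show ?thesis
    using pi_hat_uminus[OF assms(1,2)]
    by (simp add: right_diff_distrib sum_subtractf sum_negf abs_le_iff)
qed

definition V_trunc :: "real \<Rightarrow> real" where "V_trunc x = indicator {- real k .. real k} x * \<bar>x\<bar> powr m"

lemma V_trunc_meas[measurable]: "V_trunc \<in> borel_measurable borel" unfolding V_trunc_def by measurable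

lemma V_trunc_bounded: "\<bar>V_trunc x\<bar> \<le> real k powr m"
  unfolding V_trunc_def using m by (auto split: split_indicator intro!: powr_mono2)

lemma V_trunc_nonneg: "0 \<le> V_trunc x" unfolding V_trunc_def by simp

lemma V_trunc_on_cell: assumes "x \<in> C i" "i < q" shows "V_trunc x = \<bar>x\<bar> powr m"
proof -
  have "x \<in> {- real k .. real k}" using cell_subset[OF assms(2)] assms(1) by auto
  then show ?thesis unfolding V_trunc_def by simp
qed

lemma mfun_V_trunc_le: assumes x: "x \<in> C i"
  shows "mf i V_trunc \<le> drift_rate * \<bar>x\<bar> powr m + drift_const"
proof -
  have "mf i V_trunc \<le> (\<integral>y. \<bar>y\<bar> powr m * \<nu> (y - \<rho> * x) \<partial>lborel)"
    unfolding mfun_def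
  proof (rule integral_mono[OF integrable_indicator_bounded_mult_pm[OF V_trunc_meas V_trunc_bounded] integrable_powr_mult_nu_shift])
    fix y
    have "V_trunc y * pm i y \<le> \<bar>y\<bar> powr m * \<nu> (y - \<rho> * x)"
      unfolding V_trunc_def using pm_le_kernel[OF x, of y] pm_nonneg[of i y]
      by (auto split: split_indicator intro!: mult_left_mono)
    then show "indicator {- real k..real k} y * V_trunc y * pm i y \<le> \<bar>y\<bar> powr m * \<nu> (y - \<rho> * x)"
      using V_trunc_nonneg[of y] pm_nonneg[of i y]
      by (auto split: split_indicator intro: order_trans[rotated])
  qed simp
  also have "\<dots> \<le> drift_rate * \<bar>x\<bar> powr m + drift_const" by (rule moment_drift)
  finally show ?thesis .
qed

lemma pi_hat_V_trunc_le: "pi_hat V_trunc \<le> drift_level"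
proof -
  have "pi_hat V_trunc = (\<Sum>i<q. \<pi>s i * mf i V_trunc)"
    using pi_hat_eq_sum[OF V_trunc_meas V_trunc_bounded] m by (simp add: V_trunc_def[of 0])
  also have "\<dots> \<le> pi_hat (\<lambda>x. drift_rate * V_trunc x + drift_const)"
  proof (rule sum_cellwise_lower_le_pi_hat)
    show "\<bar>drift_rate * V_trunc x + drift_const\<bar> \<le> drift_rate * real k powr m + drift_const" for x
      using V_trunc_bounded[of x] V_trunc_nonneg[of x] drift_rate_nonneg drift_const_nonneg
      by (auto intro!: mult_left_mono)
    show "mf i V_trunc \<le> drift_rate * V_trunc x + drift_const" if "i < q" "x \<in> C i" for i x
      using mfun_V_trunc_le V_trunc_on_cell that by simp
  qed simp
  also have "\<dots> = drift_rate * pi_hat V_trunc + drift_const"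
    by (rule pi_hat_affine[OF V_trunc_meas V_trunc_bounded])
  finally have "(1 - drift_rate) * pi_hat V_trunc \<le> drift_const" by (simp add: algebra_simps)
  then show ?thesis unfolding drift_level_def using drift_rate_less_1 by (simp add: field_simps)
qed

text \<open>Mass of the kernel lost by the discretisation: the part outside [-k, k] is controlled by the m-th
  moment, the part lost to the infimum over the cell by the local variation of \<nu>.\<close>
lemma kernel_minus_trunc_pm_le:
  assumes x: "x \<in> C i"
  shows "\<nu> (y - \<rho> * x) - indicator {- real k..real k} y * 1 * pm i y
    \<le> real k powr (- m) * (\<bar>y\<bar> powr m * \<nu> (y - \<rho> * x)) + local_var (\<bar>\<rho>\<bar> * d) (y - \<rho> * x)"
proof (cases "y \<in> {- real k..real k}")
  case True
  have "0 \<le> real k powr (- m) * (\<bar>y\<bar> powr m * \<nu> (y - \<rho> * x))" by (simp add: nu_nonneg)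
  with True show ?thesis using kernel_minus_local_var_le_pm[OF x, of y] by simp
next
  case False
  then have "1 \<le> real k powr (- m) * \<bar>y\<bar> powr m"
    using k1 m by (intro one_le_powr_minus_mult_powr) auto
  from mult_right_mono[OF this nu_nonneg]
  have "\<nu> (y - \<rho> * x) \<le> real k powr (- m) * (\<bar>y\<bar> powr m * \<nu> (y - \<rho> * x))"
    by (simp add: mult.assoc)
  then show ?thesis using False local_var_nonneg by (simp add: add_increasing2)
qed

lemma one_minus_mfun_le:
  assumes x: "x \<in> C i"
  shows "1 - mf i (\<lambda>_. 1) \<le> real k powr (- m) * (drift_rate * \<bar>x\<bar> powr m + drift_const) + 2 * (\<bar>\<rho>\<bar> * d) * var_nu"
proof -
  let ?a = "\<bar>\<rho>\<bar> * d"
  have a0: "0 \<le> ?a" using dpos by simp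
  have int1: "integrable lborel (\<lambda>y. indicator {- real k..real k} y * 1 * pm i y)"
    by (rule integrable_indicator_bounded_mult_pm[of "\<lambda>_. 1" 1]) auto
  have "1 - mf i (\<lambda>_. 1) = (\<integral>y. \<nu> (y - \<rho> * x) - indicator {- real k..real k} y * 1 * pm i y \<partial>lborel)"
    unfolding mfun_def using int1 integrable_nu_shift
    by (simp add: Bochner_Integration.integral_diff integral_nu_shift)
  also have "\<dots> \<le> (\<integral>y. real k powr (- m) * (\<bar>y\<bar> powr m * \<nu> (y - \<rho> * x)) + local_var ?a (y - \<rho> * x) \<partial>lborel)"
    using int1 integrable_nu_shift a0
    by (intro integral_mono kernel_minus_trunc_pm_le[OF x] Bochner_Integration.integrable_diff
        Bochner_Integration.integrable_add integrable_mult_right integrable_powr_mult_nu_shift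
        integrable_local_var_shift)
  also have "\<dots> = real k powr (- m) * (\<integral>y. \<bar>y\<bar> powr m * \<nu> (y - \<rho> * x) \<partial>lborel) + 2 * ?a * var_nu"
    using a0 by (subst Bochner_Integration.integral_add)
      (auto intro!: integrable_powr_mult_nu_shift integrable_local_var_shift simp: integral_local_var_shift)
  also have "\<dots> \<le> real k powr (- m) * (drift_rate * \<bar>x\<bar> powr m + drift_const) + 2 * ?a * var_nu"
    by (intro add_right_mono mult_left_mono moment_drift) simp
  finally show ?thesis .
qed

lemma defect_le: "defect \<le> real k powr (- m) * drift_level + 2 * d * var_nu"
proof -
  define a where "a = real k powr (- m) * drift_rate"
  define b where "b = real k powr (- m) * drift_const + 2 * (\<bar>\<rho>\<bar> * d) * var_nu"
  have a0: "0 \<le> a" using drift_rate_nonneg by (simp add: a_def)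
  have b0: "0 \<le> b" using drift_const_nonneg dpos var_nu_nonneg by (simp add: b_def)
  have "defect = (\<Sum>i<q. \<pi>s i * (1 - mf i (\<lambda>_. 1)))" by (rule defect_eq_sum)
  also have "\<dots> \<le> pi_hat (\<lambda>x. a * V_trunc x + b)"
  proof (rule sum_cellwise_lower_le_pi_hat)
    show "\<bar>a * V_trunc x + b\<bar> \<le> a * real k powr m + b" for x
      using V_trunc_bounded[of x] V_trunc_nonneg[of x] a0 b0 by (auto intro!: mult_left_mono)
    show "1 - mf i (\<lambda>_. 1) \<le> a * V_trunc x + b" if "i < q" "x \<in> C i" for i x
      using one_minus_mfun_le[of x i] V_trunc_on_cell[of x i] that by (simp add: a_def b_def algebra_simps)
  qed simp
  also have "\<dots> = a * pi_hat V_trunc + b" by (rule pi_hat_affine[OF V_trunc_meas V_trunc_bounded])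
  also have "\<dots> \<le> a * drift_level + b" using pi_hat_V_trunc_le a0 by (simp add: mult_left_mono)
  also have "\<dots> = real k powr (- m) * (drift_rate * drift_level + drift_const) + 2 * (\<bar>\<rho>\<bar> * d) * var_nu"
    by (simp add: a_def b_def algebra_simps)
  also have "\<dots> = real k powr (- m) * drift_level + 2 * (\<bar>\<rho>\<bar> * d) * var_nu"
    by (simp only: drift_level_fixpoint)
  also have "\<dots> \<le> real k powr (- m) * drift_level + 2 * d * var_nu"
    using rho dpos var_nu_nonneg by (intro add_left_mono mult_right_mono) auto
  finally show ?thesis .
qed

lemma P_on_cell_approx:
  assumes [measurable]: "g \<in> borel_measurable borel" and b: "\<And>y. \<bar>g y\<bar> \<le> 1" and x: "x \<in> C i"
  shows "\<bar>P g x - (mf i g + (1 - mf i (\<lambda>_. 1)) * g 0)\<bar> \<le> 2 * (1 - mf i (\<lambda>_. 1))"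
proof -
  let ?D = "\<lambda>y. \<nu> (y - \<rho> * x) - indicator {- real k..real k} y * 1 * pm i y"
  have int1: "integrable lborel (\<lambda>y. indicator {- real k..real k} y * 1 * pm i y)"
    by (rule integrable_indicator_bounded_mult_pm[of "\<lambda>_. 1" 1]) auto
  have intg: "integrable lborel (\<lambda>y. indicator {- real k..real k} y * g y * pm i y)"
    by (rule integrable_indicator_bounded_mult_pm[OF assms(1) b]) auto
  have Dnn: "0 \<le> ?D y" for y
    using pm_le_kernel[OF x, of y] pm_nonneg[of i y] by (auto split: split_indicator)
  have Dint: "integrable lborel ?D" using int1 integrable_nu_shift by simp
  have Dval: "(\<integral>y. ?D y \<partial>lborel) = 1 - mf i (\<lambda>_. 1)"
    unfolding mfun_def using int1 integrable_nu_shift by (simp add: Bochner_Integration.integral_diff integral_nu_shift)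
  have "P g x - mf i g = (\<integral>y. g y * ?D y \<partial>lborel)"
  proof -
    have "(\<integral>y. g y * ?D y \<partial>lborel) = (\<integral>y. g y * \<nu> (y - \<rho> * x) - indicator {- real k..real k} y * g y * pm i y \<partial>lborel)"
      by (rule Bochner_Integration.integral_cong) (simp_all add: right_diff_distrib)
    also have "\<dots> = P g x - mf i g"
      unfolding P_def mfun_def by (rule Bochner_Integration.integral_diff[OF integrable_bounded_mult_nu_shift[OF assms(1) b] intg])
    finally show ?thesis by simp
  qed
  then have "\<bar>P g x - mf i g\<bar> \<le> (\<integral>y. \<bar>g y * ?D y\<bar> \<partial>lborel)" by simp
  also have "\<dots> \<le> (\<integral>y. ?D y \<partial>lborel)"
  proof (rule integral_mono'[OF Dint])
    fix y show "\<bar>g y * ?D y\<bar> \<le> ?D y"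
      using b[of y] Dnn[of y] by (simp add: abs_mult mult_left_le_one_le)
    show "0 \<le> ?D y" by (rule Dnn)
  qed
  finally have 1: "\<bar>P g x - mf i g\<bar> \<le> 1 - mf i (\<lambda>_. 1)" using Dval by simp
  have 2: "\<bar>(1 - mf i (\<lambda>_. 1)) * g 0\<bar> \<le> 1 - mf i (\<lambda>_. 1)"
    using b[of 0] mfun_one_le_1[of i] by (simp add: abs_mult mult_left_le)
  have "\<bar>(P g x - mf i g) - (1 - mf i (\<lambda>_. 1)) * g 0\<bar> \<le> \<bar>P g x - mf i g\<bar> + \<bar>(1 - mf i (\<lambda>_. 1)) * g 0\<bar>"
    by (rule abs_triangle_ineq4)
  then show ?thesis using 1 2 by (simp add: algebra_simps)
qed

text \<open>One step of the chain moves pi_hat by at most twice the lost mass: P g and the discretised kernel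
  agree on each cell up to 2 (1 - mf i 1).\<close>
lemma pi_hat_P_dev:
  assumes [measurable]: "g \<in> borel_measurable borel" and b: "\<And>y. \<bar>g y\<bar> \<le> 1"
  shows "\<bar>pi_hat (P g) - pi_hat g\<bar> \<le> 2 * defect"
proof -
  have Pm[measurable]: "P g \<in> borel_measurable borel" and Pb: "\<And>y. \<bar>P g y\<bar> \<le> 1"
    using P_iter_measurable_bounded_lipschitz[OF assms, of 1] by auto
  have "pi_hat g = (\<Sum>i<q. \<pi>s i * (mf i g + (1 - mf i (\<lambda>_. 1)) * g 0))"
    unfolding pi_hat_eq_sum[OF assms] defect_eq_sum
    by (simp add: distrib_left sum.distrib sum_distrib_right sum_distrib_left mult_ac)
  moreover have "2 * defect = (\<Sum>i<q. \<pi>s i * (2 * (1 - mf i (\<lambda>_. 1))))"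
    unfolding defect_eq_sum sum_distrib_left by (rule sum.cong) (simp_all add: algebra_simps)
  moreover have "\<bar>pi_hat (P g) - (\<Sum>i<q. \<pi>s i * (mf i g + (1 - mf i (\<lambda>_. 1)) * g 0))\<bar>
      \<le> (\<Sum>i<q. \<pi>s i * (2 * (1 - mf i (\<lambda>_. 1))))"
    by (rule abs_pi_hat_minus_sum_le[OF Pm Pb P_on_cell_approx[OF assms]])
  ultimately show ?thesis by simp
qed

lemma pi_hat_P_iter_dev:
  assumes [measurable]: "f \<in> borel_measurable borel" and b: "\<And>y. \<bar>f y\<bar> \<le> 1"
  shows "\<bar>pi_hat ((P ^^ n) f) - pi_hat f\<bar> \<le> 2 * defect * real n"
proof (induction n)
  case (Suc n)
  have gm: "(P ^^ n) f \<in> borel_measurable borel" and gb: "\<And>y. \<bar>(P ^^ n) f y\<bar> \<le> 1"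
    using P_iter_measurable_bounded_lipschitz[OF assms, of n] by auto
  from pi_hat_P_dev[OF gm gb] Suc show ?case by (simp add: algebra_simps)
qed simp

lemma pi_hat_lipschitz_dev:
  assumes [measurable]: "h \<in> borel_measurable borel" and b: "\<And>y. \<bar>h y\<bar> \<le> 1"
    and L: "\<And>x x'. \<bar>h x - h x'\<bar> \<le> L * \<bar>x - x'\<bar>" and L0: "0 \<le> L"
  shows "\<bar>pi_hat h - h 0\<bar> \<le> L * (1 + drift_level)"
proof -
  have "\<bar>pi_hat (\<lambda>x. 1 * h x + - h 0)\<bar> \<le> pi_hat (\<lambda>x. L * V_trunc x + L)"
  proof (rule abs_pi_hat_le)
    show "\<bar>1 * h y + - h 0\<bar> \<le> 2" for y using b[of y] b[of 0] by linarith
    show "\<bar>L * V_trunc y + L\<bar> \<le> L * real k powr m + L" for y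
      using V_trunc_bounded[of y] V_trunc_nonneg[of y] L0 by (auto intro!: mult_left_mono)
    fix x assume "x \<in> {- real k ..< real k}"
    then have "\<bar>x\<bar> \<le> 1 + V_trunc x" using abs_le_one_plus_powr[OF m, of x] by (simp add: V_trunc_def)
    then have "L * \<bar>x - 0\<bar> \<le> L * (1 + V_trunc x)" using L0 by (simp add: mult_left_mono)
    then have "L * \<bar>x - 0\<bar> \<le> L * V_trunc x + L" by (simp add: algebra_simps)
    then show "\<bar>1 * h x + - h 0\<bar> \<le> L * V_trunc x + L" using L[of x 0] by simp
  qed simp_all
  also have "\<dots> = L * pi_hat V_trunc + L" by (rule pi_hat_affine[OF V_trunc_meas V_trunc_bounded])
  also have "\<dots> \<le> L * (1 + drift_level)"
    using pi_hat_V_trunc_le L0 by (simp add: algebra_simps mult_left_mono)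
  finally show ?thesis using pi_hat_affine[OF assms(1,2), of 1 "- h 0"] by simp
qed

subsection \<open>Total variation estimate\<close>

lemma integral_p_minus_pi_hat_le:
  assumes [measurable]: "f \<in> borel_measurable borel" and b: "\<And>y. \<bar>f y\<bar> \<le> 1" and N: "1 \<le> N"
  shows "\<bar>(\<integral>y. f y * \<pp> y \<partial>lborel) - pi_hat f\<bar> \<le> 2 * defect * real N + 2 * var_nu * \<bar>\<rho>\<bar> ^ N * (p_moment1 + 1 + drift_level)"
proof -
  let ?h = "(P ^^ N) f"
  let ?L = "2 * var_nu * \<bar>\<rho>\<bar> ^ N"
  have hm: "?h \<in> borel_measurable borel" and hb: "\<And>y. \<bar>?h y\<bar> \<le> 1"
    and hl: "\<And>x x'. \<bar>?h x - ?h x'\<bar> \<le> ?L * \<bar>x - x'\<bar>"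
    using P_iter_measurable_bounded_lipschitz[OF assms(1,2), of N] N by auto
  have L0: "0 \<le> ?L" using var_nu_nonneg by simp
  have invariant: "(\<integral>y. f y * \<pp> y \<partial>lborel) = (\<integral>y. ?h y * \<pp> y \<partial>lborel)"
    by (rule integral_P_iter_invariant[OF assms(1,2)])
  have p_close: "\<bar>(\<integral>y. ?h y * \<pp> y \<partial>lborel) - ?h 0\<bar> \<le> ?L * p_moment1"
    by (rule integral_p_lipschitz_dev[OF hm hb hl])
  have pi_hat_close: "\<bar>pi_hat ?h - ?h 0\<bar> \<le> ?L * (1 + drift_level)"
    by (rule pi_hat_lipschitz_dev[OF hm hb hl L0])
  have pi_hat_moves: "\<bar>pi_hat ?h - pi_hat f\<bar> \<le> 2 * defect * real N"
    by (rule pi_hat_P_iter_dev[OF assms(1,2)])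
  have "\<bar>(\<integral>y. f y * \<pp> y \<partial>lborel) - pi_hat f\<bar> \<le> ?L * p_moment1 + ?L * (1 + drift_level) + 2 * defect * real N"
    using invariant p_close pi_hat_close pi_hat_moves by linarith
  then show ?thesis by (simp add: algebra_simps)
qed

lemma abs_dev_le_tv_dist:
  assumes [measurable]: "f \<in> borel_measurable borel" and b: "\<And>y. \<bar>f y\<bar> \<le> 1"
  shows "\<bar>(\<integral>y. f y * \<pp> y \<partial>lborel) - pi_hat f\<bar> \<le> tv_dist \<pp> pd"
  unfolding tv_dist_def pi_hat_def[symmetric]
proof (rule cSUP_upper)
  show "f \<in> {f. f \<in> borel_measurable borel \<and> (\<forall>x. \<bar>f x\<bar> \<le> 1)}" using b by simp
  have "\<bar>(\<integral>y. g y * \<pp> y \<partial>lborel) - pi_hat g\<bar> \<le> 2 * defect + 2 * var_nu * \<bar>\<rho>\<bar> * (p_moment1 + 1 + drift_level)"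
    if "g \<in> {f. f \<in> borel_measurable borel \<and> (\<forall>x. \<bar>f x\<bar> \<le> 1)}" for g
    using integral_p_minus_pi_hat_le[of g 1] that by simp
  then show "bdd_above ((\<lambda>f. \<bar>(\<integral>y. f y * \<pp> y \<partial>lborel) - pi_hat f\<bar>) `
      {f. f \<in> borel_measurable borel \<and> (\<forall>x. \<bar>f x\<bar> \<le> 1)})"
    by (rule bdd_aboveI2)
qed

lemma tv_dist_le:
  assumes "1 \<le> N"
  shows "tv_dist \<pp> pd \<le> 2 * defect * real N + 2 * var_nu * \<bar>\<rho>\<bar> ^ N * (p_moment1 + 1 + drift_level)"
  unfolding tv_dist_def pi_hat_def[symmetric]
  by (rule cSUP_least) (auto intro!: exI[of _ "\<lambda>_. 0"] integral_p_minus_pi_hat_le assms)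

text \<open>The test function 1 - indicator {0} sees the whole atom that pi_hat puts at 0.\<close>
lemma defect_le_tv_dist: "defect \<le> tv_dist \<pp> pd"
proof -
  define f :: "real \<Rightarrow> real" where "f y = 1 - indicator {0::real} y" for y
  have f: "f \<in> borel_measurable borel" "\<And>y. \<bar>f y\<bar> \<le> 1"
    unfolding f_def by (auto split: split_indicator)
  have "(\<integral>y. f y * \<pp> y \<partial>lborel) = (\<integral>y. \<pp> y \<partial>lborel)"
    by (rule integral_discrete_difference[where X = "{0}"]) (auto simp: f_def)
  moreover have "(\<integral>y. f y * pd y \<partial>lborel) = (\<integral>y. pd y \<partial>lborel)"
    by (rule integral_discrete_difference[where X = "{0}"]) (auto simp: f_def)
  ultimately have "\<bar>(\<integral>y. f y * \<pp> y \<partial>lborel) - pi_hat f\<bar> = defect"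
    using defect_nonneg by (simp add: pi_hat_def f_def p_one defect_def)
  then show ?thesis using abs_dev_le_tv_dist[OF f] by simp
qed

lemma L1_dist_le_tv_dist_plus_defect: "(\<integral>y. \<bar>\<pp> y - pd y\<bar> \<partial>lborel) \<le> tv_dist \<pp> pd + defect"
proof -
  define f where "f y = (if pd y \<le> \<pp> y then 1 else - 1 :: real)" for y
  have fm[measurable]: "f \<in> borel_measurable borel" unfolding f_def by measurable
  have fb: "\<And>y. \<bar>f y\<bar> \<le> 1" by (simp add: f_def)
  have "(\<integral>y. \<bar>\<pp> y - pd y\<bar> \<partial>lborel) = (\<integral>y. f y * \<pp> y - f y * pd y \<partial>lborel)"
    by (rule Bochner_Integration.integral_cong) (auto simp: f_def)
  also have "\<dots> = (\<integral>y. f y * \<pp> y \<partial>lborel) - (\<integral>y. f y * pd y \<partial>lborel)"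
    by (rule Bochner_Integration.integral_diff[OF integrable_bounded_mult_p[OF fm fb] integrable_mult_pd[OF fm fb]])
  also have "\<dots> = ((\<integral>y. f y * \<pp> y \<partial>lborel) - pi_hat f) + defect * f 0"
    by (simp add: pi_hat_def defect_def)
  also have "\<dots> \<le> tv_dist \<pp> pd + defect"
    using abs_dev_le_tv_dist[OF fm fb] mult_left_le[OF _ defect_nonneg, of "f 0"] fb[of 0] by linarith
  finally show ?thesis .
qed

lemma L1_dist_le_twice_tv_dist: "(\<integral>y. \<bar>\<pp> y - pd y\<bar> \<partial>lborel) \<le> 2 * tv_dist \<pp> pd"
  using L1_dist_le_tv_dist_plus_defect defect_le_tv_dist by simp

lemma tv_dist_le_log:
  assumes small: "real k powr (- m) + d \<le> exp (- 1)"
  shows "tv_dist \<pp> pd \<le> tv_const * (\<bar>ln (real k powr (- m) + d)\<bar> * (real k powr (- m) + d))"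
proof -
  define \<tau> where "\<tau> = real k powr (- m) + d"
  define A where "A = 2 * (drift_level + 2 * var_nu)"
  define B where "B = 2 * var_nu * (p_moment1 + 1 + drift_level)"
  have A0: "0 \<le> A" and B0: "0 \<le> B"
    using drift_level_nonneg var_nu_nonneg p_moment1_nonneg by (auto simp: A_def B_def)
  have \<tau>0: "0 < \<tau>" using dpos k1 by (simp add: \<tau>_def add_pos_pos)
  have "defect \<le> real k powr (- m) * drift_level + 2 * d * var_nu" by (rule defect_le)
  also have "\<dots> \<le> \<tau> * drift_level + 2 * \<tau> * var_nu"
    using drift_level_nonneg var_nu_nonneg dpos
    by (intro add_mono mult_right_mono) (auto simp: \<tau>_def)
  finally have defect_\<tau>: "2 * defect \<le> A * \<tau>" by (simp add: A_def algebra_simps)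
  have "tv_dist \<pp> pd \<le> A * \<tau> * real N + B * rho_mid ^ N" if "1 \<le> N" for N
  proof -
    have "\<bar>\<rho>\<bar> ^ N \<le> rho_mid ^ N" using rho by (intro power_mono) (auto simp: rho_mid_def)
    then have "(2 * var_nu * (p_moment1 + 1 + drift_level)) * \<bar>\<rho>\<bar> ^ N
        \<le> (2 * var_nu * (p_moment1 + 1 + drift_level)) * rho_mid ^ N"
      using var_nu_nonneg p_moment1_nonneg drift_level_nonneg by (intro mult_left_mono) auto
    then have "2 * var_nu * \<bar>\<rho>\<bar> ^ N * (p_moment1 + 1 + drift_level) \<le> B * rho_mid ^ N"
      unfolding B_def by (simp only: mult_ac)
    moreover have "2 * defect * real N \<le> A * \<tau> * real N"
      using defect_\<tau> by (intro mult_right_mono) auto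
    ultimately show ?thesis using tv_dist_le[OF that] by linarith
  qed
  from log_tradeoff_bound[OF rho_mid_pos rho_mid_less_1 \<tau>0 small[folded \<tau>_def] A0 B0 this]
  show ?thesis by (simp add: tv_const_def A_def B_def \<tau>_def)
qed

end

lemma (in ar1) tv_dist_and_L1_dist_bigo:
  fixes \<delta> :: "nat \<Rightarrow> real" and \<pi>s :: "nat \<Rightarrow> nat option \<Rightarrow> real"
  assumes delta_pos: "\<And>k. 1 \<le> k \<Longrightarrow> 0 < \<delta> k"
    and delta_O: "\<delta> \<in> O(\<lambda>k. 1 / real k)"
    and delta_int: "\<And>k. 1 \<le> k \<Longrightarrow> \<exists>n::nat. 2 * real k / \<delta> k = real n"
    and pis: "\<And>k. 1 \<le> k \<Longrightarrow> is_stationary \<rho> \<nu> \<delta> k (\<pi>s k)"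
  defines "\<tau> \<equiv> \<lambda>k. real k powr (- m) + \<delta> k"
  shows "(\<lambda>k. tv_dist \<pp> (pdens_k \<rho> \<nu> \<delta> k (\<pi>s k))) \<in> O(\<lambda>k. \<bar>ln (\<tau> k)\<bar> * \<tau> k)"
    and "(\<lambda>k. \<integral>y. \<bar>\<pp> y - pdens_k \<rho> \<nu> \<delta> k (\<pi>s k) y\<bar> \<partial>lborel) \<in> O(\<lambda>k. \<bar>ln (\<tau> k)\<bar> * \<tau> k)"
proof -
  let ?tv = "\<lambda>k. tv_dist \<pp> (pdens_k \<rho> \<nu> \<delta> k (\<pi>s k))"
  let ?L1 = "\<lambda>k. \<integral>y. \<bar>\<pp> y - pdens_k \<rho> \<nu> \<delta> k (\<pi>s k) y\<bar> \<partial>lborel"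
  have bounds: "norm (?tv k) \<le> tv_const * norm (\<bar>ln (\<tau> k)\<bar> * \<tau> k)
      \<and> norm (?L1 k) \<le> 2 * tv_const * norm (\<bar>ln (\<tau> k)\<bar> * \<tau> k)"
    if k: "1 \<le> k" and small: "\<tau> k \<le> exp (- 1)" for k
  proof -
    interpret ar1_discretised \<rho> m \<nu> \<nu>' \<pp> \<delta> k "\<pi>s k"
      by (intro ar1_discretised.intro ar1_axioms ar1_discretised_axioms.intro k delta_pos delta_int pis)
    have tv: "tv_dist \<pp> pd \<le> tv_const * (\<bar>ln (\<tau> k)\<bar> * \<tau> k)"
      using tv_dist_le_log small by (simp add: \<tau>_def)
    have "0 \<le> tv_dist \<pp> pd" using defect_le_tv_dist defect_nonneg by simp
    then have "norm (?tv k) = tv_dist \<pp> pd" by simp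
    moreover have "norm (\<bar>ln (\<tau> k)\<bar> * \<tau> k) = \<bar>ln (\<tau> k)\<bar> * \<tau> k"
      using dpos k by (simp add: \<tau>_def abs_mult)
    moreover have "norm (?L1 k) = ?L1 k" by (simp add: integral_nonneg_AE)
    ultimately show ?thesis using tv L1_dist_le_twice_tv_dist by simp
  qed
  have "eventually (\<lambda>k. 1 \<le> k \<and> \<tau> k \<le> exp (- 1)) at_top"
    using eventually_ge_at_top[of 1] eventually_powr_plus_small[OF delta_O m exp_gt_zero]
    by eventually_elim (simp add: \<tau>_def)
  then have ev: "eventually (\<lambda>k. norm (?tv k) \<le> tv_const * norm (\<bar>ln (\<tau> k)\<bar> * \<tau> k)
      \<and> norm (?L1 k) \<le> 2 * tv_const * norm (\<bar>ln (\<tau> k)\<bar> * \<tau> k)) at_top"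
    by (rule eventually_mono) (metis bounds)
  show "?tv \<in> O(\<lambda>k. \<bar>ln (\<tau> k)\<bar> * \<tau> k)"
    by (rule bigoI[where c = tv_const]) (use ev in \<open>auto elim: eventually_mono\<close>)
  show "?L1 \<in> O(\<lambda>k. \<bar>ln (\<tau> k)\<bar> * \<tau> k)"
    by (rule bigoI[where c = "2 * tv_const"]) (use ev in \<open>auto elim: eventually_mono\<close>)
qed

theorem proposition2:
  fixes \<rho> m :: real and \<nu> \<nu>' \<nu>'' \<pp> :: "real \<Rightarrow> real"
    and \<delta> :: "nat \<Rightarrow> real" and \<pi>s :: "nat \<Rightarrow> nat option \<Rightarrow> real"
  assumes rho: "\<bar>\<rho>\<bar> < 1"
    and nu_meas: "\<nu> \<in> borel_measurable borel"
    and nu_nonneg: "\<And>x. 0 \<le> \<nu> x"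
    and nu_int: "integrable lborel \<nu>"
    and nu_one: "(\<integral>x. \<nu> x \<partial>lborel) = 1"
    and m: "1 \<le> m"
    and moment: "integrable lborel (\<lambda>x. \<bar>x\<bar> powr m * \<nu> x)"
    and nu_deriv: "\<And>x. (\<nu> has_real_derivative \<nu>' x) (at x)"
    and nu'_cont: "continuous_on UNIV \<nu>'"
    and nu'_rderiv: "\<And>t. (\<nu>' has_real_derivative \<nu>'' t) (at t within {t..})"
    and I': "integrable lborel (\<lambda>y. \<bar>\<nu>' y\<bar>)"
    and M'': "\<exists>M. \<forall>t. \<bar>\<nu>'' t\<bar> \<le> M"
    and p_meas: "\<pp> \<in> borel_measurable borel"
    and p_nonneg: "\<And>x. 0 \<le> \<pp> x"
    and p_int: "integrable lborel \<pp>"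
    and p_one: "(\<integral>x. \<pp> x \<partial>lborel) = 1"
    and p_invariant: "\<And>A. A \<in> sets borel \<Longrightarrow>
        (\<integral>y. indicator A y * \<pp> y \<partial>lborel)
        = (\<integral>x. \<pp> x * (\<integral>y. indicator A y * \<nu> (y - \<rho> * x) \<partial>lborel) \<partial>lborel)"
    and delta_pos: "\<And>k. 1 \<le> k \<Longrightarrow> 0 < \<delta> k"
    and delta_O: "\<delta> \<in> O(\<lambda>k. 1 / real k)"
    and delta_int: "\<And>k. 1 \<le> k \<Longrightarrow> \<exists>n::nat. 2 * real k / \<delta> k = real n"
    and pis: "\<And>k. 1 \<le> k \<Longrightarrow> is_stationary \<rho> \<nu> \<delta> k (\<pi>s k)"
  shows "(\<lambda>k. tv_dist \<pp> (pdens_k \<rho> \<nu> \<delta> k (\<pi>s k)))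
           \<in> O(\<lambda>k. \<bar>ln (real k powr (- m) + \<delta> k)\<bar> * (real k powr (- m) + \<delta> k)) \<and>
         (\<lambda>k. \<integral>y. \<bar>\<pp> y - pdens_k \<rho> \<nu> \<delta> k (\<pi>s k) y\<bar> \<partial>lborel)
           \<in> O(\<lambda>k. \<bar>ln (real k powr (- m) + \<delta> k)\<bar> * (real k powr (- m) + \<delta> k))"
proof -
  interpret ar1 \<rho> m \<nu> \<nu>' \<pp>
    using rho nu_meas nu_nonneg nu_int nu_one m moment nu_deriv nu'_cont I' p_meas p_nonneg p_int
      p_one p_invariant
    by unfold_locales auto
  show ?thesis
    using tv_dist_and_L1_dist_bigo[OF delta_pos delta_O delta_int pis] by blast
qed
end
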